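(* For a prime $p$, let $I=\{1,2,\dots,\lfloor p/2\rfloor-1\}$, $K=\lceil\log p\rceil$, and let $R\subset I$ be the random set obtained by including each element of $I$ independently with probability $Kp^{-2/3}$. Then, for $p$ sufficiently large and with absolute implied constants: (a) $\mathbb E\,|R\cap(R+R+\{0,1\})|\ll K^3$; (b) $\mathbb P\big(\exists n\in\mathbb Z:\ (1_R*1_R)(n)\ge 9\big)\ll K^{-1}$; (c) $\mathbb P\big(\exists n\in\mathbb Z\setminus\{0\}:\ (1_R*1_{-R})(n)\ge 8\big)\ll K^{-1}$; (d) $\mathbb P\big(\exists n\in[p/5,7p/5]\cap\mathbb Z:\ \#\{T\in\mathcal T(n):T\subset R\}\le K^2\big)\ll K^{-1}$, where $\mathcal T(n)$ is the collection of $3$-element subsets $\{a,b,c\}\subset I$ of pairwise distinct elements with $a+b+c=n$.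
   Context: $(f*g)(n)=\sum_{a+b=n}f(a)g(b)$ denotes additive convolution on $\mathbb Z$; $1_R$ is the indicator function of $R$ and $-R=\{-r:r\in R\}$. *)

theory Defs
  imports "HOL-Analysis.Analysis" "HOL-Computational_Algebra.Primes"
begin

definition conv :: "(int \<Rightarrow> real) \<Rightarrow> (int \<Rightarrow> real) \<Rightarrow> int \<Rightarrow> real" where
  "conv f g n = (\<Sum>\<^sub>\<infinity>a. f a * g (n - a))"

text \<open>Random subset R of a finite set I, each element included independently with
  probability q: the law is P(R = S) = q^|S| (1-q)^(|I|-|S|) for S \<subseteq> I.\<close>
definition rweight :: "int set \<Rightarrow> real \<Rightarrow> int set \<Rightarrow> real" where
  "rweight I q S = q ^ card S * (1 - q) ^ (card I - card S)"

definition rexp :: "int set \<Rightarrow> real \<Rightarrow> (int set \<Rightarrow> real) \<Rightarrow> real" where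
  "rexp I q F = (\<Sum>S\<in>Pow I. rweight I q S * F S)"

definition rprob :: "int set \<Rightarrow> real \<Rightarrow> (int set \<Rightarrow> bool) \<Rightarrow> real" where
  "rprob I q P = (\<Sum>S\<in>{S\<in>Pow I. P S}. rweight I q S)"

definition triples :: "int set \<Rightarrow> int \<Rightarrow> int set set" where
  "triples I n = {T. T \<subseteq> I \<and> card T = 3 \<and> \<Sum>T = n}"

end

theory Submission
  imports Defs "HOL-Real_Asymp.Real_Asymp"
begin

(*
  The random set is the product measure given by rweight, so expectations and probabilities are
  finite sums; besides linearity, the union bound and the inequalities of Markov and Chebyshev,
  the proof only uses that disjoint parts of the random set are independent.  Write L = |I| ~ p/2
  and q = K p^(-2/3).

  (a) Every element of R \<inter> (R + R + {0, 1}) comes from a triple (a, b, e) with a, b, a + b + e in R.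
  At most 2 L^2 such triples involve three elements and at most 2 L only two, so the expectation
  is O(L^2 q^3 + L q^2) = O(K^3).

  (b), (c) Nine representations n = a + (n - a), resp. eight differences n = c - (c - n), contain
  four pairs with eight distinct elements of R.  There are at most p L^4 such configurations, each
  present with probability q^8, and p L^4 q^8 = O(K^8 p^(-1/3)) = O(1/K).

  (d) Given n in [p/5, 7p/5], pick consecutive blocks A, B of length M ~ p/200 such that n - A - B
  lies below both blocks.  Outside probability O(1/K), R meets A and B in about qM points and the
  sums of these have few coincidences, so R \<inter> A + R \<inter> B has about (qM)^2 ~ K^2 p^(2/3) elements.
  Each gives a candidate third element n - a - b outside A \<union> B, present independently with
  probability q; a binomial tail estimate shows that fewer than K^2 of them are present with
  probability exp(-c K^3), which survives the union bound over the O(p) values of n.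
*)

lemma bij_betw_Un_Pow:
  assumes "A \<inter> B = {}"
  shows "bij_betw (\<lambda>(X, Y). X \<union> Y) (Pow A \<times> Pow B) (Pow (A \<union> B))"
proof (rule bij_betwI')
  fix u v assume uv: "u \<in> Pow A \<times> Pow B" "v \<in> Pow A \<times> Pow B"
  obtain X Y X' Y' where u: "u = (X, Y)" and v: "v = (X', Y')" by (cases u, cases v)
  have "X = (X \<union> Y) \<inter> A" "Y = (X \<union> Y) \<inter> B" "X' = (X' \<union> Y') \<inter> A" "Y' = (X' \<union> Y') \<inter> B"
    using uv assms unfolding u v by auto
  then show "((\<lambda>(X, Y). X \<union> Y) u = (\<lambda>(X, Y). X \<union> Y) v) = (u = v)"
    unfolding u v by (metis case_prod_conv)
next
  fix S assume "S \<in> Pow (A \<union> B)"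
  then have "S = (\<lambda>(X, Y). X \<union> Y) (S \<inter> A, S \<inter> B)" "(S \<inter> A, S \<inter> B) \<in> Pow A \<times> Pow B" by auto
  then show "\<exists>u\<in>Pow A \<times> Pow B. S = (\<lambda>(X, Y). X \<union> Y) u" by blast
qed auto

lemma rweight_nonneg: "0 \<le> q \<Longrightarrow> q \<le> 1 \<Longrightarrow> 0 \<le> rweight I q S"
  unfolding rweight_def by simp

lemma sum_rweight_Pow:
  assumes "finite I"
  shows "(\<Sum>S\<in>Pow I. rweight I q S) = 1"
proof -
  have "(\<Sum>S\<in>Pow I. rweight I q S) = (\<Sum>S\<in>Pow I. (\<Prod>x\<in>S. q) * (\<Prod>x\<in>I - S. 1 - q))"
    using assms by (intro sum.cong) (auto simp: rweight_def card_Diff_subset finite_subset)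
  also have "\<dots> = (\<Prod>x\<in>I. q + (1 - q))"
    using prod_add[OF assms, of "\<lambda>_. q" "\<lambda>_. 1 - q"] by simp
  finally show ?thesis by simp
qed

lemma rweight_Un:
  assumes "finite I1" "finite I2" "I1 \<inter> I2 = {}" "S1 \<subseteq> I1" "S2 \<subseteq> I2"
  shows "rweight (I1 \<union> I2) q (S1 \<union> S2) = rweight I1 q S1 * rweight I2 q S2"
proof -
  have "finite S1" "finite S2" "S1 \<inter> S2 = {}" using assms by (auto intro: finite_subset)
  then have "card (S1 \<union> S2) = card S1 + card S2" by (rule card_Un_disjoint)
  moreover have "card (I1 \<union> I2) = card I1 + card I2" using assms card_Un_disjoint by blast
  moreover have "card S1 \<le> card I1" "card S2 \<le> card I2" using assms by (meson card_mono)+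
  ultimately have "card (I1 \<union> I2) - card (S1 \<union> S2) = (card I1 - card S1) + (card I2 - card S2)"
    by simp
  with \<open>card (S1 \<union> S2) = card S1 + card S2\<close> show ?thesis
    unfolding rweight_def by (simp add: power_add)
qed

lemma rexp_const: "finite I \<Longrightarrow> rexp I q (\<lambda>_. c) = c"
  unfolding rexp_def by (simp add: sum_rweight_Pow flip: sum_distrib_right)

lemma rexp_mono:
  assumes "0 \<le> q" "q \<le> 1" "\<And>S. S \<subseteq> I \<Longrightarrow> F S \<le> G S"
  shows "rexp I q F \<le> rexp I q G"
  unfolding rexp_def using assms by (intro sum_mono mult_left_mono) (auto simp: rweight_nonneg)

lemma rexp_add: "rexp I q (\<lambda>S. F S + G S) = rexp I q F + rexp I q G"
  unfolding rexp_def by (simp add: distrib_left sum.distrib)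

lemma rexp_cmult: "rexp I q (\<lambda>S. c * F S) = c * rexp I q F"
  unfolding rexp_def by (simp add: sum_distrib_left mult.left_commute)

lemma rexp_sum: "rexp I q (\<lambda>S. \<Sum>x\<in>X. F x S) = (\<Sum>x\<in>X. rexp I q (F x))"
  unfolding rexp_def by (simp add: sum_distrib_left sum.swap[of _ X])

lemma rexp_Un:
  assumes "finite I1" "finite I2" "I1 \<inter> I2 = {}"
  shows "rexp (I1 \<union> I2) q F = (\<Sum>S1\<in>Pow I1. rweight I1 q S1 * rexp I2 q (\<lambda>S2. F (S1 \<union> S2)))"
proof -
  have "(\<Sum>S1\<in>Pow I1. rweight I1 q S1 * rexp I2 q (\<lambda>S2. F (S1 \<union> S2)))
      = (\<Sum>(S1, S2)\<in>Pow I1 \<times> Pow I2. rweight I1 q S1 * rweight I2 q S2 * F (S1 \<union> S2))"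
    unfolding rexp_def by (simp add: sum_distrib_left mult.assoc sum.cartesian_product)
  also have "\<dots> = (\<Sum>(S1, S2)\<in>Pow I1 \<times> Pow I2. rweight (I1 \<union> I2) q (S1 \<union> S2) * F (S1 \<union> S2))"
    using assms by (intro sum.cong) (auto simp: rweight_Un)
  also have "\<dots> = rexp (I1 \<union> I2) q F"
    unfolding rexp_def using sum.reindex_bij_betw[OF bij_betw_Un_Pow[OF assms(3)]]
    by (simp add: case_prod_unfold)
  finally show ?thesis ..
qed

lemma rexp_restrict:
  assumes "finite I" "W \<subseteq> I"
  shows "rexp I q (\<lambda>S. G (S \<inter> W)) = rexp W q G"
proof -
  have fin: "finite W" "finite (I - W)" using assms finite_subset by auto
  have "I = W \<union> (I - W)" using assms by auto
  then have "rexp I q (\<lambda>S. G (S \<inter> W))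
      = (\<Sum>S1\<in>Pow W. rweight W q S1 * rexp (I - W) q (\<lambda>S2. G ((S1 \<union> S2) \<inter> W)))"
    using rexp_Un[OF fin, of q] by auto
  also have "\<dots> = (\<Sum>S1\<in>Pow W. rweight W q S1 * rexp (I - W) q (\<lambda>_. G S1))"
    unfolding rexp_def by (intro sum.cong refl arg_cong2[where f = "(*)"]) (auto intro!: arg_cong[where f = G])
  also have "\<dots> = (\<Sum>S1\<in>Pow W. rweight W q S1 * G S1)"
    using rexp_const[OF fin(2)] by simp
  finally show ?thesis by (simp add: rexp_def)
qed

lemma rexp_subset_indicator:
  assumes "finite I" "A \<subseteq> I"
  shows "rexp I q (\<lambda>S. if A \<subseteq> S then 1 else 0) = q ^ card A"
proof -
  have "rexp I q (\<lambda>S. if A \<subseteq> S then 1 else 0) = rexp I q (\<lambda>S. if A \<subseteq> S \<inter> A then 1 else 0)"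
    by (intro arg_cong[where f = "rexp I q"]) auto
  also have "\<dots> = rexp A q (\<lambda>T. if A \<subseteq> T then 1 else 0)"
    by (rule rexp_restrict[OF assms, of q "\<lambda>T. if A \<subseteq> T then 1 else 0"])
  also have "\<dots> = (\<Sum>T\<in>Pow A. if T = A then rweight A q T else 0)"
    unfolding rexp_def by (intro sum.cong) auto
  also have "\<dots> = rweight A q A"
    using sum.delta'[of "Pow A" A "rweight A q"] assms finite_subset by force
  also have "\<dots> = q ^ card A" by (simp add: rweight_def)
  finally show ?thesis .
qed

lemma rprob_eq_rexp: "finite I \<Longrightarrow> rprob I q P = rexp I q (\<lambda>S. if P S then 1 else 0)"
proof -
  assume "finite I"
  then have "rprob I q P = (\<Sum>S\<in>Pow I. if P S then rweight I q S else 0)"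
    unfolding rprob_def by (intro sum.inter_filter) simp
  then show ?thesis
    unfolding rexp_def by (simp add: if_distrib cong: if_cong)
qed

lemma rprob_False: "rprob I q (\<lambda>_. False) = 0"
  unfolding rprob_def by simp

lemma rprob_superset:
  "finite I \<Longrightarrow> A \<subseteq> I \<Longrightarrow> rprob I q (\<lambda>S. A \<subseteq> S) = q ^ card A"
  by (simp add: rprob_eq_rexp rexp_subset_indicator)

lemma rprob_le_rexp:
  assumes "finite I" "0 \<le> q" "q \<le> 1"
    and "\<And>S. S \<subseteq> I \<Longrightarrow> 0 \<le> F S" "\<And>S. S \<subseteq> I \<Longrightarrow> P S \<Longrightarrow> 1 \<le> F S"
  shows "rprob I q P \<le> rexp I q F"
  unfolding rprob_eq_rexp[OF assms(1)] using assms by (intro rexp_mono) auto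

lemma rprob_mono:
  assumes "finite I" "0 \<le> q" "q \<le> 1" "\<And>S. S \<subseteq> I \<Longrightarrow> P S \<Longrightarrow> Q S"
  shows "rprob I q P \<le> rprob I q Q"
  unfolding rprob_eq_rexp[OF assms(1)] using assms by (intro rexp_mono) auto

lemma rprob_disj_le:
  assumes "finite I" "0 \<le> q" "q \<le> 1"
  shows "rprob I q (\<lambda>S. P S \<or> Q S) \<le> rprob I q P + rprob I q Q"
proof -
  have "rprob I q (\<lambda>S. P S \<or> Q S) \<le> rexp I q (\<lambda>S. (if P S then 1 else 0) + (if Q S then 1 else 0))"
    using assms by (intro rprob_le_rexp) auto
  then show ?thesis unfolding rexp_add rprob_eq_rexp[OF assms(1)] .
qed

lemma rprob_le_sum:
  assumes "finite I" "0 \<le> q" "q \<le> 1" "finite X"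
    and "\<And>S. S \<subseteq> I \<Longrightarrow> Q S \<Longrightarrow> \<exists>x\<in>X. P x S"
  shows "rprob I q Q \<le> (\<Sum>x\<in>X. rprob I q (P x))"
proof -
  have "rprob I q Q \<le> rexp I q (\<lambda>S. \<Sum>x\<in>X. if P x S then 1 else 0)"
  proof (rule rprob_le_rexp[OF assms(1-3)])
    fix S assume "S \<subseteq> I" "Q S"
    then obtain x where x: "x \<in> X" "P x S" using assms(5) by blast
    have "(\<Sum>x\<in>{x}. if P x S then 1 else 0) \<le> (\<Sum>x\<in>X. if P x S then 1 else (0::real))"
      using x assms(4) by (intro sum_mono2) auto
    then show "1 \<le> (\<Sum>x\<in>X. if P x S then 1 else (0::real))" using x by simp
  qed (auto intro: sum_nonneg)
  then show ?thesis unfolding rexp_sum rprob_eq_rexp[OF assms(1)] .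
qed

lemma rprob_Un:
  assumes "finite I1" "finite I2" "I1 \<inter> I2 = {}"
  shows "rprob (I1 \<union> I2) q P = (\<Sum>S1\<in>Pow I1. rweight I1 q S1 * rprob I2 q (\<lambda>S2. P (S1 \<union> S2)))"
  unfolding rprob_eq_rexp[OF assms(2)] rprob_eq_rexp[OF finite_UnI[OF assms(1,2)]]
  by (rule rexp_Un[OF assms])

lemma rprob_restrict:
  assumes "finite I" "W \<subseteq> I"
  shows "rprob I q (\<lambda>S. P (S \<inter> W)) = rprob W q P"
  unfolding rprob_eq_rexp[OF assms(1)] rprob_eq_rexp[OF finite_subset[OF assms(2,1)]]
  by (rule rexp_restrict[OF assms])

lemma real_card_eq_sum_indicator:
  "finite W \<Longrightarrow> S \<subseteq> W \<Longrightarrow> real (card S) = (\<Sum>x\<in>W. if {x} \<subseteq> S then 1 else 0)"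
  by (simp add: sum.If_cases Int_absorb1)

lemma rexp_card:
  assumes "finite W"
  shows "rexp W q (\<lambda>S. real (card S)) = real (card W) * q"
proof -
  have "rexp W q (\<lambda>S. real (card S)) = rexp W q (\<lambda>S. \<Sum>x\<in>W. if {x} \<subseteq> S then 1 else 0)"
    unfolding rexp_def using assms by (intro sum.cong refl) (simp add: real_card_eq_sum_indicator)
  also have "\<dots> = (\<Sum>x\<in>W. q)"
    unfolding rexp_sum using rexp_subset_indicator[OF assms, of "{_}" q] by (intro sum.cong refl) simp
  finally show ?thesis by simp
qed

lemma rexp_card_squared:
  assumes "finite W"
  shows "rexp W q (\<lambda>S. real (card S) ^ 2) = real (card W) * q + real (card W) * (real (card W) - 1) * q ^ 2"
proof -
  let ?N = "real (card W)"
  have "rexp W q (\<lambda>S. real (card S) ^ 2) = rexp W q (\<lambda>S. \<Sum>x\<in>W. \<Sum>y\<in>W. if {x, y} \<subseteq> S then 1 else 0)"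
  proof (unfold rexp_def, intro sum.cong refl arg_cong2[where f = "(*)"])
    fix S assume "S \<in> Pow W"
    then have "real (card S) ^ 2
        = (\<Sum>x\<in>W. if {x} \<subseteq> S then 1 else 0) * (\<Sum>y\<in>W. if {y} \<subseteq> S then 1 else 0)"
      using real_card_eq_sum_indicator[OF assms] by (simp add: power2_eq_square)
    also have "\<dots> = (\<Sum>x\<in>W. \<Sum>y\<in>W. (if {x} \<subseteq> S then 1 else 0) * (if {y} \<subseteq> S then 1 else (0::real)))"
      by (rule sum_product)
    also have "\<dots> = (\<Sum>x\<in>W. \<Sum>y\<in>W. if {x, y} \<subseteq> S then 1 else 0)"
      by (intro sum.cong refl) auto
    finally show "real (card S) ^ 2 = (\<Sum>x\<in>W. \<Sum>y\<in>W. if {x, y} \<subseteq> S then 1 else 0)" .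
  qed
  also have "\<dots> = (\<Sum>x\<in>W. \<Sum>y\<in>W. q ^ card {x, y})"
    unfolding rexp_sum using assms by (intro sum.cong refl rexp_subset_indicator) auto
  also have "\<dots> = (\<Sum>x\<in>W. q + (?N - 1) * q ^ 2)"
  proof (intro sum.cong refl)
    fix x assume x: "x \<in> W"
    have "(\<Sum>y\<in>W. q ^ card {x, y}) = q ^ card {x, x} + (\<Sum>y\<in>W - {x}. q ^ card {x, y})"
      using x assms by (simp add: sum.remove)
    also have "(\<Sum>y\<in>W - {x}. q ^ card {x, y}) = (\<Sum>y\<in>W - {x}. q ^ 2)"
      by (intro sum.cong) (auto simp: power2_eq_square)
    moreover have "1 \<le> card W" using x assms by (auto simp: Suc_le_eq card_gt_0_iff)
    ultimately show "(\<Sum>y\<in>W. q ^ card {x, y}) = q + (?N - 1) * q ^ 2"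
      using x assms by (simp add: card_Diff_singleton of_nat_diff)
  qed
  finally show ?thesis by (simp add: algebra_simps power2_eq_square)
qed

lemma rprob_card_less_half_mean:
  assumes "finite W" "0 \<le> q" "q \<le> 1" "0 < real (card W) * q"
  shows "rprob W q (\<lambda>S. real (card S) < real (card W) * q / 2) \<le> 4 / (real (card W) * q)"
proof -
  let ?m = "real (card W) * q"
  let ?V = "\<lambda>S. (4 / ?m ^ 2) * (real (card S) ^ 2 + (- 2 * ?m) * real (card S) + ?m ^ 2)"
  have V: "?V S = (4 / ?m ^ 2) * (real (card S) - ?m) ^ 2" for S
    by (simp add: power2_eq_square algebra_simps)
  have "rprob W q (\<lambda>S. real (card S) < ?m / 2) \<le> rexp W q ?V"
  proof (rule rprob_le_rexp[OF assms(1-3)])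
    fix S assume "real (card S) < ?m / 2"
    then have "?m / 2 \<le> ?m - real (card S)" by linarith
    then have "(?m / 2) ^ 2 \<le> (?m - real (card S)) ^ 2"
      using assms(4) by (intro power_mono) auto
    then have "(?m / 2) ^ 2 \<le> (real (card S) - ?m) ^ 2" by (simp add: power2_commute)
    then have "4 / ?m ^ 2 * (?m / 2) ^ 2 \<le> (4 / ?m ^ 2) * (real (card S) - ?m) ^ 2"
      by (rule mult_left_mono) simp
    moreover have "?m \<noteq> 0" using assms(4) by linarith
    then have "4 / ?m ^ 2 * (?m / 2) ^ 2 = 1" by (simp add: power2_eq_square field_simps)
    ultimately show "1 \<le> ?V S" unfolding V by simp
  qed (simp only: V, simp)
  also have "\<dots> = (4 / ?m ^ 2) * (rexp W q (\<lambda>S. real (card S) ^ 2)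
      + (- 2 * ?m) * rexp W q (\<lambda>S. real (card S)) + ?m ^ 2)"
    by (simp only: rexp_cmult rexp_add rexp_const[OF assms(1)])
  also have "\<dots> = 4 * (1 - q) / ?m"
  proof -
    have "q \<noteq> 0" "real (card W) \<noteq> 0" using assms(4) by (auto simp: zero_less_mult_iff)
    then show ?thesis unfolding rexp_card_squared[OF assms(1)] rexp_card[OF assms(1)]
      by (simp add: power2_eq_square field_simps)
  qed
  also have "\<dots> \<le> 4 / ?m"
    using assms by (intro divide_right_mono) auto
  finally show ?thesis .
qed

lemma rprob_card_le:
  assumes "finite W" "card W = N" "0 \<le> q" "q \<le> 1" "k \<le> N" "1 \<le> real N * q"
  shows "rprob W q (\<lambda>S. card S \<le> k) \<le> real (k + 1) * (real N * q) ^ k * (1 - q) ^ (N - k)"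
proof -
  let ?X = "{S\<in>Pow W. card S \<le> k}"
  have "rprob W q (\<lambda>S. card S \<le> k) = (\<Sum>S\<in>?X. q ^ card S * (1 - q) ^ (N - card S))"
    unfolding rprob_def rweight_def assms(2) ..
  also have "\<dots> \<le> (\<Sum>S\<in>?X. q ^ card S * (1 - q) ^ (N - k))"
    using assms by (intro sum_mono mult_left_mono power_decreasing) auto
  also have "\<dots> = (\<Sum>j\<le>k. real (card {S\<in>?X. card S = j}) * (q ^ j * (1 - q) ^ (N - k)))"
    by (subst sum.group[symmetric, of _ "{..k}" card]) (use assms(1) in auto)
  also have "\<dots> \<le> (\<Sum>j\<le>k. (real N * q) ^ k * (1 - q) ^ (N - k))"
  proof (intro sum_mono)
    fix j assume j: "j \<in> {..k}"
    have "{S\<in>?X. card S = j} = {S. S \<subseteq> W \<and> card S = j}" using j by auto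
    then have "card {S\<in>?X. card S = j} = N choose j" using n_subsets[OF assms(1), of j] assms(2) by simp
    also have "\<dots> \<le> N ^ j" by (rule binomial_le_pow) (use j assms(5) in auto)
    finally have "real (card {S\<in>?X. card S = j}) \<le> real N ^ j" by (simp flip: of_nat_power)
    then have "real (card {S\<in>?X. card S = j}) * (q ^ j * (1 - q) ^ (N - k))
        \<le> (real N * q) ^ j * (1 - q) ^ (N - k)"
      using assms by (simp add: power_mult_distrib mult.assoc mult_right_mono)
    also have "\<dots> \<le> (real N * q) ^ k * (1 - q) ^ (N - k)"
      using j assms by (intro mult_right_mono power_increasing) auto
    finally show "real (card {S\<in>?X. card S = j}) * (q ^ j * (1 - q) ^ (N - k))
        \<le> (real N * q) ^ k * (1 - q) ^ (N - k)" .
  qed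
  finally show ?thesis by simp
qed

lemma card_Int_sums_le:
  fixes R :: "int set"
  assumes "finite R"
  shows "card (R \<inter> {a + b + e | a b e. a \<in> R \<and> b \<in> R \<and> e \<in> {0, 1}})
    \<le> card {(a, b, e) \<in> R \<times> R \<times> {0, 1}. a + b + e \<in> R}"
proof -
  have "R \<inter> {a + b + e | a b e. a \<in> R \<and> b \<in> R \<and> e \<in> {0, 1}}
      \<subseteq> (\<lambda>(a, b, e). a + b + e) ` {(a, b, e) \<in> R \<times> R \<times> {0, 1}. a + b + e \<in> R}"
  proof
    fix x assume "x \<in> R \<inter> {a + b + e | a b e. a \<in> R \<and> b \<in> R \<and> e \<in> {0, 1}}"
    then obtain a b e where "x = a + b + e" "x \<in> R" "a \<in> R" "b \<in> R" "e \<in> {0, 1}" by blast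
    then show "x \<in> (\<lambda>(a, b, e). a + b + e) ` {(a, b, e) \<in> R \<times> R \<times> {0, 1}. a + b + e \<in> R}"
      by (intro rev_image_eqI[of "(a, b, e)"]) auto
  qed
  moreover have fin: "finite {(a, b, e) \<in> R \<times> R \<times> {0, 1}. a + b + e \<in> R}"
    by (rule finite_subset[of _ "R \<times> R \<times> {0, 1}"]) (use assms in auto)
  ultimately show ?thesis
    by (meson card_image_le card_mono finite_imageI order_trans)
qed

lemma sum_diagonal_weights:
  fixes I :: "int set" and c d :: real
  assumes "finite I"
  shows "(\<Sum>t\<in>I \<times> I \<times> {0, 1 :: int}. c + (if fst t = fst (snd t) then d else 0))
    = 2 * real (card I) ^ 2 * c + 2 * real (card I) * d"
proof -
  let ?G = "I \<times> I \<times> {0, 1 :: int}"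
  have "{t\<in>?G. fst t = fst (snd t)} = (\<lambda>(a, e). (a, a, e)) ` (I \<times> {0, 1})" by auto
  then have "card {t\<in>?G. fst t = fst (snd t)} = card I * 2"
    by (simp add: card_image inj_on_def card_cartesian_product)
  moreover have "card ?G = card I * card I * 2" by (simp add: card_cartesian_product)
  ultimately show ?thesis
    using assms by (simp add: sum.distrib sum.If_cases Int_def conj_commute power2_eq_square)
qed

text \<open>Positivity makes \<open>a + b + e\<close> differ from \<open>a\<close> and \<open>b\<close>, so a triple involves three elements
  of \<open>R\<close> unless \<open>a = b\<close>.\<close>
lemma rexp_card_sum_triples_le:
  fixes I :: "int set"
  assumes fI: "finite I" and pos: "\<And>x. x \<in> I \<Longrightarrow> 0 < x" and q0: "0 \<le> q" and q1: "q \<le> 1"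
  shows "rexp I q (\<lambda>R. real (card {(a, b, e) \<in> R \<times> R \<times> {0, 1}. a + b + e \<in> R}))
     \<le> 2 * real (card I) ^ 2 * q ^ 3 + 2 * real (card I) * q ^ 2"
proof -
  define G where "G = I \<times> I \<times> ({0, 1} :: int set)"
  define T where "T = {(a, b, e) \<in> G. a + b + e \<in> I}"
  define el :: "int \<times> int \<times> int \<Rightarrow> int set" where "el = (\<lambda>(a, b, e). {a, b, a + b + e})"
  have fG: "finite G" using fI by (simp add: G_def)
  then have fT: "finite T" by (rule rev_finite_subset) (auto simp: T_def)
  have "rexp I q (\<lambda>R. real (card {(a, b, e) \<in> R \<times> R \<times> {0, 1}. a + b + e \<in> R}))
      = rexp I q (\<lambda>R. \<Sum>t\<in>T. if el t \<subseteq> R then 1 else 0)"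
  proof (unfold rexp_def, intro sum.cong refl arg_cong2[where f = "(*)"])
    fix R assume "R \<in> Pow I"
    then have "{(a, b, e) \<in> R \<times> R \<times> {0, 1}. a + b + e \<in> R} = {t \<in> T. el t \<subseteq> R}"
      unfolding T_def G_def el_def by auto
    then show "real (card {(a, b, e) \<in> R \<times> R \<times> {0, 1}. a + b + e \<in> R})
        = (\<Sum>t\<in>T. if el t \<subseteq> R then 1 else 0)"
      by (simp only: real_of_card sum.inter_filter[OF fT])
  qed
  also have "\<dots> = (\<Sum>t\<in>T. q ^ card (el t))"
    unfolding rexp_sum
    by (intro sum.cong refl rexp_subset_indicator[OF fI]) (auto simp: T_def G_def el_def)
  also have "\<dots> \<le> (\<Sum>t\<in>T. q ^ 3 + (if fst t = fst (snd t) then q ^ 2 else 0))"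
  proof (intro sum_mono)
    fix t assume t: "t \<in> T"
    obtain a b e where te: "t = (a, b, e)" by (cases t) auto
    have h: "a > 0" "b > 0" "e \<ge> 0" using t pos unfolding te T_def G_def by auto
    show "q ^ card (el t) \<le> q ^ 3 + (if fst t = fst (snd t) then q ^ 2 else 0)"
    proof (cases "a = b")
      case True
      then have "card (el t) = 2" unfolding te el_def using h by simp
      then show ?thesis using True te q0 by simp
    next
      case False
      then have "card (el t) = 3" unfolding te el_def using h by simp
      then show ?thesis using False te q0 by simp
    qed
  qed
  also have "\<dots> \<le> (\<Sum>t\<in>G. q ^ 3 + (if fst t = fst (snd t) then q ^ 2 else 0))"
    using q0 by (intro sum_mono2[OF fG]) (auto simp: T_def)
  also have "\<dots> = 2 * real (card I) ^ 2 * q ^ 3 + 2 * real (card I) * q ^ 2"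
    unfolding G_def by (rule sum_diagonal_weights[OF fI])
  finally show ?thesis .
qed

lemma rexp_card_Int_sums_le:
  fixes I :: "int set"
  assumes "finite I" "\<And>x. x \<in> I \<Longrightarrow> 0 < x" "0 \<le> q" "q \<le> 1"
  shows "rexp I q (\<lambda>R. real (card (R \<inter> {a + b + e | a b e. a \<in> R \<and> b \<in> R \<and> e \<in> {0, 1}})))
     \<le> 2 * real (card I) ^ 2 * q ^ 3 + 2 * real (card I) * q ^ 2"
proof -
  have "rexp I q (\<lambda>R. real (card (R \<inter> {a + b + e | a b e. a \<in> R \<and> b \<in> R \<and> e \<in> {0, 1}})))
      \<le> rexp I q (\<lambda>R. real (card {(a, b, e) \<in> R \<times> R \<times> {0, 1}. a + b + e \<in> R}))"
  proof (rule rexp_mono[OF assms(3,4)])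
    fix S assume "S \<subseteq> I"
    then have "finite S" using assms(1) by (rule finite_subset)
    then show "real (card (S \<inter> {a + b + e | a b e. a \<in> S \<and> b \<in> S \<and> e \<in> {0, 1}}))
        \<le> real (card {(a, b, e) \<in> S \<times> S \<times> {0, 1}. a + b + e \<in> S})"
      by (simp only: of_nat_le_iff) (rule card_Int_sums_le)
  qed
  also have "\<dots> \<le> 2 * real (card I) ^ 2 * q ^ 3 + 2 * real (card I) * q ^ 2"
    by (rule rexp_card_sum_triples_le[OF assms])
  finally show ?thesis .
qed

lemma card_subsets_le_pow:
  assumes "finite I"
  shows "card {D. D \<subseteq> I \<and> card D = k} \<le> card I ^ k"
proof -
  have "card {D. D \<subseteq> I \<and> card D = k} = card I choose k" using assms by (rule n_subsets)
  also have "\<dots> \<le> card I ^ k" by (cases "k \<le> card I") (simp_all add: binomial_le_pow binomial_eq_0)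
  finally show ?thesis .
qed

lemma rprob_le_card_configurations:
  assumes fI: "finite I" and q: "0 \<le> q" "q \<le> 1" and fN: "finite N"
    and config: "\<And>R. R \<subseteq> I \<Longrightarrow> P R \<Longrightarrow> \<exists>n\<in>N. \<exists>D\<subseteq>I. card D = k \<and> card (U n D) = j \<and> U n D \<subseteq> R"
  shows "rprob I q P \<le> real (card N) * real (card I) ^ k * q ^ j"
proof -
  define X where "X = {(n, D) \<in> N \<times> {D. D \<subseteq> I \<and> card D = k}. U n D \<subseteq> I \<and> card (U n D) = j}"
  have fX: "finite (N \<times> {D. D \<subseteq> I \<and> card D = k})" using fI fN by simp
  have "rprob I q P \<le> (\<Sum>x\<in>X. rprob I q (\<lambda>R. U (fst x) (snd x) \<subseteq> R))"
  proof (rule rprob_le_sum[OF fI q])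
    show "finite X" unfolding X_def by (rule finite_subset[OF _ fX]) auto
    fix R assume "R \<subseteq> I" "P R"
    then obtain n D where "n \<in> N" "D \<subseteq> I" "card D = k" "card (U n D) = j" "U n D \<subseteq> R"
      using config by blast
    with \<open>R \<subseteq> I\<close> show "\<exists>x\<in>X. U (fst x) (snd x) \<subseteq> R"
      unfolding X_def by (intro bexI[of _ "(n, D)"]) auto
  qed
  also have "\<dots> = (\<Sum>x\<in>X. q ^ j)"
    by (intro sum.cong refl) (auto simp: X_def rprob_superset[OF fI])
  also have "\<dots> = real (card X) * q ^ j" by simp
  also have "\<dots> \<le> real (card N) * real (card I) ^ k * q ^ j"
  proof -
    have "X \<subseteq> N \<times> {D. D \<subseteq> I \<and> card D = k}" unfolding X_def by auto
    then have "card X \<le> card N * card {D. D \<subseteq> I \<and> card D = k}"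
      using card_mono[OF fX] by (simp add: card_cartesian_product)
    also have "\<dots> \<le> card N * card I ^ k" by (simp add: card_subsets_le_pow[OF fI])
    finally show ?thesis using q by (intro mult_right_mono) (simp_all flip: of_nat_power of_nat_mult)
  qed
  finally show ?thesis .
qed

lemma conv_indicator_self:
  fixes R :: "int set"
  assumes "finite R"
  shows "conv (indicator R) (indicator R) n = real (card {a\<in>R. n - a \<in> R})"
proof -
  have "conv (indicator R) (indicator R) n = infsum (\<lambda>a. if n - a \<in> R then 1 else 0) R"
    unfolding conv_def by (rule infsum_cong_neutral) (auto simp: indicator_def)
  also have "\<dots> = (\<Sum>a\<in>R. if n - a \<in> R then 1 else 0)" using assms by simp
  also have "\<dots> = real (card {a\<in>R. n - a \<in> R})"
    by (simp only: real_of_card sum.inter_filter[OF assms])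
  finally show ?thesis .
qed

lemma conv_indicator_uminus:
  fixes R :: "int set"
  assumes "finite R"
  shows "conv (indicator R) (indicator (uminus ` R)) n = real (card {a\<in>R. a - n \<in> R})"
proof -
  have "n - a \<in> uminus ` R \<longleftrightarrow> a - n \<in> R" for a
  proof
    assume "n - a \<in> uminus ` R"
    then obtain x where "x \<in> R" "n - a = - x" by auto
    moreover have "a - n = x" using \<open>n - a = - x\<close> by simp
    ultimately show "a - n \<in> R" by simp
  next
    assume "a - n \<in> R"
    then show "n - a \<in> uminus ` R" by (intro image_eqI[of _ _ "a - n"]) auto
  qed
  then have "conv (indicator R) (indicator (uminus ` R)) n = infsum (\<lambda>a. if a - n \<in> R then 1 else 0) R"
    unfolding conv_def by (intro infsum_cong_neutral) (auto simp: indicator_def)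
  also have "\<dots> = (\<Sum>a\<in>R. if a - n \<in> R then 1 else 0)" using assms by simp
  also have "\<dots> = real (card {a\<in>R. a - n \<in> R})"
    by (simp only: real_of_card sum.inter_filter[OF assms])
  finally show ?thesis .
qed

text \<open>Representations \<open>n = a + (n - a)\<close> come in pairs, except possibly \<open>a = n/2\<close>.\<close>
lemma obtain_four_representation_pairs:
  fixes R :: "int set"
  assumes "finite R" "9 \<le> card {a\<in>R. n - a \<in> R}"
  obtains D where "D \<subseteq> R" "card D = 4" "card (D \<union> (\<lambda>a. n - a) ` D) = 8" "D \<union> (\<lambda>a. n - a) ` D \<subseteq> R"
proof -
  define E where "E = {a\<in>R. n - a \<in> R}"
  define D0 where "D0 = {a\<in>E. 2 * a < n}"
  have fD0: "finite D0" using assms(1) unfolding D0_def E_def by auto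
  have "E \<subseteq> D0 \<union> (\<lambda>a. n - a) ` D0 \<union> {n div 2}"
  proof
    fix a assume a: "a \<in> E"
    consider "2 * a < n" | "2 * a = n" | "n < 2 * a" by linarith
    then show "a \<in> D0 \<union> (\<lambda>a. n - a) ` D0 \<union> {n div 2}"
    proof cases
      case 3
      then have "n - a \<in> D0" using a unfolding D0_def E_def by auto
      then show ?thesis by (auto intro: rev_image_eqI[of "n - a"])
    qed (use a in \<open>auto simp: D0_def\<close>)
  qed
  then have "card E \<le> card (D0 \<union> (\<lambda>a. n - a) ` D0 \<union> {n div 2})"
    using fD0 by (intro card_mono) auto
  also have "\<dots> \<le> card D0 + card ((\<lambda>a. n - a) ` D0) + 1"
    using card_Un_le[of "D0 \<union> (\<lambda>a. n - a) ` D0" "{n div 2}"] card_Un_le[of D0 "(\<lambda>a. n - a) ` D0"]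
    by simp
  also have "\<dots> \<le> 2 * card D0 + 1" using card_image_le[OF fD0] by simp
  finally have "4 \<le> card D0" using assms(2) unfolding E_def by linarith
  then obtain D where D: "D \<subseteq> D0" "card D = 4" "finite D" by (rule obtain_subset_with_card_n)
  have DR: "a \<in> R" "n - a \<in> R" "2 * a < n" if "a \<in> D" for a
    using D that unfolding D0_def E_def by auto
  have "D \<inter> (\<lambda>a. n - a) ` D = {}"
  proof (rule ccontr)
    assume "D \<inter> (\<lambda>a. n - a) ` D \<noteq> {}"
    then obtain a a' where "a \<in> D" "a' \<in> D" "a = n - a'" by auto
    then show False using DR(3)[of a] DR(3)[of a'] by linarith
  qed
  then have "card (D \<union> (\<lambda>a. n - a) ` D) = 8"
    using card_Un_disjoint[OF D(3)] card_image[of "\<lambda>a. n - a" D] D(2,3) by (simp add: inj_on_def)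
  then show ?thesis using that[of D] D(2) DR by blast
qed

text \<open>Among the \<open>c\<close> with \<open>c, c + d \<in> R\<close>, those with \<open>\<lfloor>c / d\<rfloor>\<close> of a fixed parity form a set
  disjoint from its translate by \<open>d\<close>.\<close>
lemma obtain_four_difference_pairs:
  fixes R :: "int set"
  assumes "finite R" "n \<noteq> 0" "8 \<le> card {a\<in>R. a - n \<in> R}"
  obtains d D where "0 < d" "D \<subseteq> R" "card D = 4" "card (D \<union> (\<lambda>a. a + d) ` D) = 8"
    "D \<union> (\<lambda>a. a + d) ` D \<subseteq> R"
proof -
  define d where "d = \<bar>n\<bar>"
  have d0: "0 < d" using assms(2) unfolding d_def by simp
  define E where "E = {c\<in>R. c + d \<in> R}"
  have fE: "finite E" using assms(1) unfolding E_def by auto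
  have "8 \<le> card E"
  proof (cases "n > 0")
    case True
    have "(\<lambda>a. a - n) ` {a\<in>R. a - n \<in> R} \<subseteq> E" unfolding E_def d_def using True by auto
    then have "card ((\<lambda>a. a - n) ` {a\<in>R. a - n \<in> R}) \<le> card E" by (rule card_mono[OF fE])
    moreover have "card ((\<lambda>a. a - n) ` {a\<in>R. a - n \<in> R}) = card {a\<in>R. a - n \<in> R}"
      by (rule card_image) (simp add: inj_on_def)
    ultimately show ?thesis using assms(3) by linarith
  next
    case False
    then have "{a\<in>R. a - n \<in> R} = E" unfolding E_def d_def using assms(2) by auto
    then show ?thesis using assms(3) by simp
  qed
  moreover define F where "F b = {c\<in>E. even (c div d) = b}" for b
  have "E = F True \<union> F False" unfolding F_def by auto
  then have "card E \<le> card (F True) + card (F False)" by (simp only: card_Un_le)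
  ultimately have "4 \<le> card (F True) \<or> 4 \<le> card (F False)" by linarith
  then obtain b where "4 \<le> card (F b)" by blast
  then obtain D where D: "D \<subseteq> F b" "card D = 4" "finite D"
    by (rule obtain_subset_with_card_n)
  have shift: "(c + d) div d = c div d + 1" for c using d0 by simp
  have "D \<inter> (\<lambda>a. a + d) ` D = {}"
  proof (rule ccontr)
    assume "D \<inter> (\<lambda>a. a + d) ` D \<noteq> {}"
    then obtain a a' where "a \<in> F b" "a' \<in> F b" "a = a' + d" using D(1) by auto
    then have "even (a div d) = b" "even (a' div d) = b" "a div d = a' div d + 1"
      unfolding F_def using shift by simp_all
    then show False by simp
  qed
  then have "card (D \<union> (\<lambda>a. a + d) ` D) = 8"
    using card_Un_disjoint[OF D(3)] card_image[of "\<lambda>a. a + d" D] D(2,3) by (simp add: inj_on_def)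
  moreover have "D \<union> (\<lambda>a. a + d) ` D \<subseteq> R" "D \<subseteq> R" using D(1) unfolding F_def E_def by auto
  ultimately show ?thesis using that[of d D] d0 D(2) by blast
qed

lemma rprob_conv_self_ge_9:
  fixes H :: int
  assumes "I \<subseteq> {1..H}" "0 \<le> q" "q \<le> 1"
  shows "rprob I q (\<lambda>R. \<exists>n. conv (indicator R) (indicator R) n \<ge> 9)
    \<le> real (nat (2 * H + 1)) * real (card I) ^ 4 * q ^ 8"
proof -
  have fI: "finite I" using assms(1) by (rule finite_subset) simp
  have "rprob I q (\<lambda>R. \<exists>n. conv (indicator R) (indicator R) n \<ge> 9)
      \<le> real (card {0..2 * H}) * real (card I) ^ 4 * q ^ 8"
  proof (rule rprob_le_card_configurations[OF fI assms(2,3)])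
    fix R assume RI: "R \<subseteq> I" and "\<exists>n. conv (indicator R) (indicator R) n \<ge> 9"
    then obtain n where n: "9 \<le> conv (indicator R) (indicator R) n" by blast
    have fR: "finite R" using RI fI by (rule finite_subset)
    then obtain D where D: "D \<subseteq> R" "card D = 4" "card (D \<union> (\<lambda>a. n - a) ` D) = 8"
        "D \<union> (\<lambda>a. n - a) ` D \<subseteq> R"
      using obtain_four_representation_pairs[of R n] n by (auto simp: conv_indicator_self)
    obtain a where "a \<in> D" using D(2) by fastforce
    then have "a \<in> R" "n - a \<in> R" using D(4) by auto
    then have "a \<in> {1..H}" "n - a \<in> {1..H}" using RI assms(1) by blast+
    then have "n \<in> {0..2 * H}" by auto
    then show "\<exists>n\<in>{0..2 * H}. \<exists>D\<subseteq>I. card D = 4 \<and> card (D \<union> (\<lambda>a. n - a) ` D) = 8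
        \<and> D \<union> (\<lambda>a. n - a) ` D \<subseteq> R"
      using D RI by blast
  qed simp
  then show ?thesis by simp
qed

lemma rprob_conv_uminus_ge_8:
  fixes H :: int
  assumes "I \<subseteq> {1..H}" "0 \<le> q" "q \<le> 1"
  shows "rprob I q (\<lambda>R. \<exists>n. n \<noteq> 0 \<and> conv (indicator R) (indicator (uminus ` R)) n \<ge> 8)
    \<le> real (nat H) * real (card I) ^ 4 * q ^ 8"
proof -
  have fI: "finite I" using assms(1) by (rule finite_subset) simp
  have "rprob I q (\<lambda>R. \<exists>n. n \<noteq> 0 \<and> conv (indicator R) (indicator (uminus ` R)) n \<ge> 8)
      \<le> real (card {1..H}) * real (card I) ^ 4 * q ^ 8"
  proof (rule rprob_le_card_configurations[OF fI assms(2,3)])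
    fix R assume RI: "R \<subseteq> I" and "\<exists>n. n \<noteq> 0 \<and> conv (indicator R) (indicator (uminus ` R)) n \<ge> 8"
    then obtain n where n: "n \<noteq> 0" "8 \<le> conv (indicator R) (indicator (uminus ` R)) n" by blast
    have fR: "finite R" using RI fI by (rule finite_subset)
    then obtain d D where D: "0 < d" "D \<subseteq> R" "card D = 4" "card (D \<union> (\<lambda>a. a + d) ` D) = 8"
        "D \<union> (\<lambda>a. a + d) ` D \<subseteq> R"
      using obtain_four_difference_pairs[of R n] n by (auto simp: conv_indicator_uminus)
    obtain a where "a \<in> D" using D(3) by fastforce
    then have "a \<in> R" "a + d \<in> R" using D(5) by auto
    then have "a \<in> {1..H}" "a + d \<in> {1..H}" using RI assms(1) by blast+
    then have "d \<in> {1..H}" using D(1) by auto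
    then show "\<exists>d\<in>{1..H}. \<exists>D\<subseteq>I. card D = 4 \<and> card (D \<union> (\<lambda>a. a + d) ` D) = 8
        \<and> D \<union> (\<lambda>a. a + d) ` D \<subseteq> R"
      using D RI by blast
  qed simp
  then show ?thesis by simp
qed

lemma card_le_card_image_plus_collisions:
  assumes "finite P"
  shows "card P \<le> card (f ` P) + card {(x, y) \<in> P \<times> P. x \<noteq> y \<and> f x = f y}"
proof -
  define g where "g = inv_into P f"
  define P' where "P' = g ` f ` P"
  have P': "P' \<subseteq> P" unfolding P'_def g_def by (auto intro: inv_into_into)
  have "card P' \<le> card (f ` P)" unfolding P'_def by (rule card_image_le) (use assms in auto)
  moreover have "card (P - P') \<le> card {(x, y) \<in> P \<times> P. x \<noteq> y \<and> f x = f y}"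
  proof (rule card_inj_on_le)
    show "inj_on (\<lambda>x. (x, g (f x))) (P - P')" by (rule inj_onI) auto
    show "(\<lambda>x. (x, g (f x))) ` (P - P') \<subseteq> {(x, y) \<in> P \<times> P. x \<noteq> y \<and> f x = f y}"
    proof
      fix z assume "z \<in> (\<lambda>x. (x, g (f x))) ` (P - P')"
      then obtain x where x: "x \<in> P" "x \<notin> P'" "z = (x, g (f x))" by auto
      have "g (f x) \<in> P'" unfolding P'_def using x by auto
      moreover have "f (g (f x)) = f x" unfolding g_def using x by (auto intro: f_inv_into_f)
      ultimately show "z \<in> {(x, y) \<in> P \<times> P. x \<noteq> y \<and> f x = f y}" using x P' by auto
    qed
    show "finite {(x, y) \<in> P \<times> P. x \<noteq> y \<and> f x = f y}"
      by (rule finite_subset[of _ "P \<times> P"]) (use assms in auto)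
  qed
  moreover have "card P = card P' + card (P - P')"
    using card_Diff_subset[OF finite_subset[OF P' assms] P'] card_mono[OF assms P'] by simp
  ultimately show ?thesis by linarith
qed

definition sum_collisions :: "int set \<Rightarrow> int set \<Rightarrow> ((int \<times> int) \<times> (int \<times> int)) set" where
  "sum_collisions X Y = {(x, y) \<in> (X \<times> Y) \<times> (X \<times> Y). x \<noteq> y \<and> fst x + snd x = fst y + snd y}"

lemma card_times_le_card_sumset:
  assumes "finite X" "finite Y"
  shows "card X * card Y \<le> card (X + Y) + card (sum_collisions X Y)"
  using card_le_card_image_plus_collisions[of "X \<times> Y" "\<lambda>(a, b). a + b"] assms
  by (simp add: card_cartesian_product set_plus_image sum_collisions_def case_prod_beta)

definition quad_elems :: "(int \<times> int) \<times> (int \<times> int) \<Rightarrow> int set" where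
  "quad_elems = (\<lambda>((a, b), (a', b')). {a, b, a', b'})"

lemma sum_collisions_Int:
  "sum_collisions (S \<inter> A) (S \<inter> B) = {z \<in> sum_collisions A B. quad_elems z \<subseteq> S}"
  unfolding sum_collisions_def quad_elems_def by auto

lemma card_sum_collisions_le:
  assumes "finite A" "finite B"
  shows "card (sum_collisions A B) \<le> card A * card B * card A"
proof -
  have "inj_on (\<lambda>((a, b), (a', b')). (a, b, a')) (sum_collisions A B)"
    by (rule inj_onI) (auto simp: sum_collisions_def)
  moreover have "(\<lambda>((a, b), (a', b')). (a, b, a')) ` sum_collisions A B \<subseteq> A \<times> B \<times> A"
    unfolding sum_collisions_def by auto
  ultimately have "card (sum_collisions A B) \<le> card (A \<times> B \<times> A)"
    by (rule card_inj_on_le) (use assms in auto)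
  then show ?thesis by (simp add: card_cartesian_product)
qed

lemma rexp_card_sum_collisions_le:
  assumes "finite I" "A \<subseteq> I" "B \<subseteq> I" "A \<inter> B = {}" "0 \<le> q"
  shows "rexp I q (\<lambda>S. real (card (sum_collisions (S \<inter> A) (S \<inter> B))))
    \<le> real (card A) ^ 2 * real (card B) * q ^ 4"
proof -
  have fin: "finite A" "finite B" using assms finite_subset by blast+
  then have fC: "finite (sum_collisions A B)"
    unfolding sum_collisions_def by (auto intro: finite_subset[of _ "(A \<times> B) \<times> (A \<times> B)"])
  have "rexp I q (\<lambda>S. real (card (sum_collisions (S \<inter> A) (S \<inter> B))))
      = rexp I q (\<lambda>S. \<Sum>z\<in>sum_collisions A B. if quad_elems z \<subseteq> S then 1 else 0)"
    unfolding sum_collisions_Int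
    by (simp only: real_of_card sum.inter_filter[OF fC])
  also have "\<dots> = (\<Sum>z\<in>sum_collisions A B. q ^ 4)"
    unfolding rexp_sum
  proof (intro sum.cong refl)
    fix z assume z: "z \<in> sum_collisions A B"
    obtain a b a' b' where z_eq: "z = ((a, b), (a', b'))" by (cases z) auto
    have h: "a \<in> A" "b \<in> B" "a' \<in> A" "b' \<in> B" "(a, b) \<noteq> (a', b')" "a + b = a' + b'"
      using z unfolding z_eq sum_collisions_def by auto
    then have "a \<noteq> a'" "b \<noteq> b'" by auto
    moreover have "a \<noteq> b" "a \<noteq> b'" "a' \<noteq> b" "a' \<noteq> b'" using h assms(4) by auto
    ultimately have "quad_elems z \<subseteq> I" "card (quad_elems z) = 4"
      using h assms(2,3) unfolding z_eq quad_elems_def by auto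
    then show "rexp I q (\<lambda>S. if quad_elems z \<subseteq> S then 1 else 0) = q ^ 4"
      by (simp add: rexp_subset_indicator[OF assms(1)])
  qed
  also have "\<dots> \<le> real (card A) ^ 2 * real (card B) * q ^ 4"
  proof -
    have "real (card (sum_collisions A B)) \<le> real (card A) ^ 2 * real (card B)"
      using card_sum_collisions_le[OF fin] unfolding power2_eq_square of_nat_mult[symmetric] of_nat_le_iff
      by (simp add: mult_ac)
    then show ?thesis using assms(5) by (simp add: mult_right_mono)
  qed
  finally show ?thesis .
qed

text \<open>Every \<open>c \<in> S2\<close> with \<open>n - c \<in> (S1 \<inter> A) + (S1 \<inter> B)\<close> completes a representation
  \<open>n = a + b + c\<close>, and distinct such \<open>c\<close> give distinct triples.\<close>
lemma card_Int_le_card_triples: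
  assumes "finite I" "A \<subseteq> I" "B \<subseteq> I" "A \<inter> B = {}" "S2 \<subseteq> I - (A \<union> B)"
    and W: "W \<subseteq> (\<lambda>s. n - s) ` ((S1 \<inter> A) + (S1 \<inter> B))"
  shows "card (S2 \<inter> W) \<le> card {T \<in> triples I n. T \<subseteq> S1 \<union> S2}"
proof -
  have "\<forall>c\<in>W. \<exists>ab. fst ab \<in> S1 \<inter> A \<and> snd ab \<in> S1 \<inter> B \<and> fst ab + snd ab = n - c"
    using W by (force simp: set_plus_def)
  then obtain pk where pk: "\<And>c. c \<in> W \<Longrightarrow>
      fst (pk c) \<in> S1 \<inter> A \<and> snd (pk c) \<in> S1 \<inter> B \<and> fst (pk c) + snd (pk c) = n - c"
    by metis
  define f where "f c = {fst (pk c), snd (pk c), c}" for c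
  have "inj_on f (S2 \<inter> W)"
  proof (rule inj_onI)
    fix c c' assume c: "c \<in> S2 \<inter> W" and c': "c' \<in> S2 \<inter> W" and "f c = f c'"
    then have "c \<in> f c'" unfolding f_def by auto
    moreover have "fst (pk c') \<in> A" "snd (pk c') \<in> B" using pk c' by auto
    moreover have "c \<notin> A \<union> B" using c assms(5) by auto
    ultimately show "c = c'" unfolding f_def by auto
  qed
  moreover have "f ` (S2 \<inter> W) \<subseteq> {T \<in> triples I n. T \<subseteq> S1 \<union> S2}"
  proof
    fix T assume "T \<in> f ` (S2 \<inter> W)"
    then obtain c where c: "c \<in> S2" "c \<in> W" "T = f c" by auto
    obtain a b where ab: "pk c = (a, b)" by (cases "pk c")
    have h: "a \<in> S1 \<inter> A" "b \<in> S1 \<inter> B" "a + b = n - c" using pk[OF c(2)] ab by auto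
    have "c \<in> I - (A \<union> B)" using c assms(5) by auto
    moreover have T: "T = {a, b, c}" using c(3) ab unfolding f_def by simp
    ultimately have "a \<noteq> b" "a \<noteq> c" "b \<noteq> c" using h assms(4) by auto
    then show "T \<in> {T \<in> triples I n. T \<subseteq> S1 \<union> S2}"
      using T h c(1) \<open>c \<in> I - (A \<union> B)\<close> assms(2,3) unfolding triples_def by auto
  qed
  moreover have "finite {T \<in> triples I n. T \<subseteq> S1 \<union> S2}"
    by (rule finite_subset[of _ "Pow I"]) (use assms(1) in \<open>auto simp: triples_def\<close>)
  ultimately show ?thesis using card_inj_on_le by blast
qed

text \<open>Conditionally on a large sumset \<open>(S1 \<inter> A) + (S1 \<inter> B)\<close>, each \<open>n\<close> has at least \<open>N0\<close> candidate
  third elements outside \<open>A \<union> B\<close>, which are included independently of \<open>S1\<close>.\<close>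
lemma rprob_few_triples_given_sumset:
  assumes fI: "finite I" and AB: "A \<subseteq> I" "B \<subseteq> I" "A \<inter> B = {}"
    and q: "0 \<le> q" "q \<le> 1" and fN: "finite Ns"
    and third: "\<And>n a b. n \<in> Ns \<Longrightarrow> a \<in> A \<Longrightarrow> b \<in> B \<Longrightarrow> n - a - b \<in> I - (A \<union> B)"
    and S1: "S1 \<subseteq> A \<union> B" and N0: "N0 \<le> card ((S1 \<inter> A) + (S1 \<inter> B))"
    and k: "k \<le> N0" "1 \<le> real N0 * q"
  shows "rprob (I - (A \<union> B)) q (\<lambda>S2. \<exists>n\<in>Ns. card {T \<in> triples I n. T \<subseteq> S1 \<union> S2} \<le> k)
    \<le> real (card Ns) * (real (k + 1) * (real N0 * q) ^ k * (1 - q) ^ (N0 - k))"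
proof -
  define Cand where "Cand n = (\<lambda>s. n - s) ` ((S1 \<inter> A) + (S1 \<inter> B))" for n
  have fA: "finite A" "finite B" using fI AB finite_subset by blast+
  have "card (Cand n) = card ((S1 \<inter> A) + (S1 \<inter> B))" for n
    unfolding Cand_def by (rule card_image) (simp add: inj_on_def)
  then have "\<exists>W. W \<subseteq> Cand n \<and> card W = N0" for n
    using N0 by (metis obtain_subset_with_card_n)
  then obtain W where W: "\<And>n. W n \<subseteq> Cand n" "\<And>n. card (W n) = N0" by metis
  have W_I: "W n \<subseteq> I - (A \<union> B)" if "n \<in> Ns" for n
  proof
    fix c assume "c \<in> W n"
    then obtain a b where "a \<in> A" "b \<in> B" "c = n - (a + b)"
      using W(1)[of n] unfolding Cand_def by (auto simp: set_plus_def)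
    then show "c \<in> I - (A \<union> B)" using third[OF that] by (simp add: diff_diff_eq)
  qed
  have fW: "finite (W n)" for n
    using W(1)[of n] fA unfolding Cand_def by (meson finite_Int finite_imageI finite_set_plus finite_subset)
  have "rprob (I - (A \<union> B)) q (\<lambda>S2. \<exists>n\<in>Ns. card {T \<in> triples I n. T \<subseteq> S1 \<union> S2} \<le> k)
      \<le> (\<Sum>n\<in>Ns. rprob (I - (A \<union> B)) q (\<lambda>S2. card (S2 \<inter> W n) \<le> k))"
  proof (rule rprob_le_sum[OF _ q fN])
    fix S2 assume S2: "S2 \<subseteq> I - (A \<union> B)" and "\<exists>n\<in>Ns. card {T \<in> triples I n. T \<subseteq> S1 \<union> S2} \<le> k"
    then obtain n where n: "n \<in> Ns" "card {T \<in> triples I n. T \<subseteq> S1 \<union> S2} \<le> k" by blast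
    have "card (S2 \<inter> W n) \<le> card {T \<in> triples I n. T \<subseteq> S1 \<union> S2}"
      by (rule card_Int_le_card_triples[OF fI AB S2]) (use W(1) in \<open>simp add: Cand_def\<close>)
    with n show "\<exists>n\<in>Ns. card (S2 \<inter> W n) \<le> k" by force
  qed (use fI in simp)
  also have "\<dots> \<le> (\<Sum>n\<in>Ns. real (k + 1) * (real N0 * q) ^ k * (1 - q) ^ (N0 - k))"
  proof (rule sum_mono)
    fix n assume "n \<in> Ns"
    then have "rprob (I - (A \<union> B)) q (\<lambda>S2. card (S2 \<inter> W n) \<le> k) = rprob (W n) q (\<lambda>S. card S \<le> k)"
      using fI W_I by (intro rprob_restrict) auto
    also have "\<dots> \<le> real (k + 1) * (real N0 * q) ^ k * (1 - q) ^ (N0 - k)"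
      by (rule rprob_card_le[OF fW W(2) q k])
    finally show "rprob (I - (A \<union> B)) q (\<lambda>S2. card (S2 \<inter> W n) \<le> k)
        \<le> real (k + 1) * (real N0 * q) ^ k * (1 - q) ^ (N0 - k)" .
  qed
  finally show ?thesis by simp
qed

lemma rprob_large_sumset_few_triples:
  assumes fI: "finite I" and AB: "A \<subseteq> I" "B \<subseteq> I" "A \<inter> B = {}"
    and q: "0 \<le> q" "q \<le> 1" and fN: "finite Ns"
    and third: "\<And>n a b. n \<in> Ns \<Longrightarrow> a \<in> A \<Longrightarrow> b \<in> B \<Longrightarrow> n - a - b \<in> I - (A \<union> B)"
    and k: "k \<le> N0" "1 \<le> real N0 * q"
  shows "rprob I q (\<lambda>R. N0 \<le> card ((R \<inter> A) + (R \<inter> B)) \<and> (\<exists>n\<in>Ns. card {T \<in> triples I n. T \<subseteq> R} \<le> k))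
    \<le> real (card Ns) * (real (k + 1) * (real N0 * q) ^ k * (1 - q) ^ (N0 - k))"
proof -
  define bound where "bound = real (card Ns) * (real (k + 1) * (real N0 * q) ^ k * (1 - q) ^ (N0 - k))"
  let ?E = "\<lambda>R. N0 \<le> card ((R \<inter> A) + (R \<inter> B)) \<and> (\<exists>n\<in>Ns. card {T \<in> triples I n. T \<subseteq> R} \<le> k)"
  have fin: "finite (A \<union> B)" "finite (I - (A \<union> B))" "(A \<union> B) \<inter> (I - (A \<union> B)) = {}"
    using fI AB finite_subset by auto
  have I: "I = (A \<union> B) \<union> (I - (A \<union> B))" using AB by auto
  have "rprob (I - (A \<union> B)) q (\<lambda>S2. ?E (S1 \<union> S2)) \<le> bound" if S1: "S1 \<subseteq> A \<union> B" for S1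
  proof -
    have Int: "(S1 \<union> S2) \<inter> A = S1 \<inter> A" "(S1 \<union> S2) \<inter> B = S1 \<inter> B" if "S2 \<subseteq> I - (A \<union> B)" for S2
      using that by auto
    show ?thesis
    proof (cases "N0 \<le> card ((S1 \<inter> A) + (S1 \<inter> B))")
      case True
      have "rprob (I - (A \<union> B)) q (\<lambda>S2. ?E (S1 \<union> S2))
          \<le> rprob (I - (A \<union> B)) q (\<lambda>S2. \<exists>n\<in>Ns. card {T \<in> triples I n. T \<subseteq> S1 \<union> S2} \<le> k)"
        using fin q by (intro rprob_mono) auto
      also have "\<dots> \<le> bound" unfolding bound_def
        by (rule rprob_few_triples_given_sumset[OF fI AB q fN third S1 True k]) auto
      finally show ?thesis .
    next
      case False
      then have "rprob (I - (A \<union> B)) q (\<lambda>S2. ?E (S1 \<union> S2)) \<le> rprob (I - (A \<union> B)) q (\<lambda>_. False)"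
        using fin q by (intro rprob_mono) (auto simp: Int)
      also have "\<dots> \<le> bound" unfolding bound_def rprob_False using q by simp
      finally show ?thesis .
    qed
  qed
  then have "rprob I q ?E \<le> (\<Sum>S1\<in>Pow (A \<union> B). rweight (A \<union> B) q S1 * bound)"
    unfolding rprob_Un[OF fin, folded I] using q by (intro sum_mono mult_left_mono) (auto simp: rweight_nonneg)
  also have "\<dots> = bound" using sum_rweight_Pow[OF fin(1)] by (simp flip: sum_distrib_right)
  finally show ?thesis unfolding bound_def .
qed

lemma rprob_card_Int_less_half_mean:
  fixes q :: real
  assumes "finite I" "X \<subseteq> I" "0 \<le> q" "q \<le> 1" "0 < q * card X"
  shows "rprob I q (\<lambda>R. real (card (R \<inter> X)) < q * card X / 2) \<le> 4 / (q * card X)"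
proof -
  have "rprob I q (\<lambda>R. real (card (R \<inter> X)) < q * card X / 2)
      = rprob X q (\<lambda>S. real (card S) < real (card X) * q / 2)"
    using rprob_restrict[OF assms(1,2), of q "\<lambda>S. real (card S) < real (card X) * q / 2"]
    by (simp add: mult.commute)
  also have "\<dots> \<le> 4 / (real (card X) * q)"
    using assms by (intro rprob_card_less_half_mean) (auto intro: finite_subset simp: mult.commute)
  finally show ?thesis by (simp add: mult.commute)
qed

lemma rprob_many_sum_collisions:
  assumes "finite I" "A \<subseteq> I" "B \<subseteq> I" "A \<inter> B = {}" "0 \<le> q" "q \<le> 1" "0 < \<tau>"
  shows "rprob I q (\<lambda>R. \<tau> < real (card (sum_collisions (R \<inter> A) (R \<inter> B))))
    \<le> real (card A) ^ 2 * real (card B) * q ^ 4 / \<tau>"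
proof -
  have "rprob I q (\<lambda>R. \<tau> < real (card (sum_collisions (R \<inter> A) (R \<inter> B))))
      \<le> rexp I q (\<lambda>R. (1 / \<tau>) * real (card (sum_collisions (R \<inter> A) (R \<inter> B))))"
    by (rule rprob_le_rexp[OF assms(1,5,6)]) (use assms(7) in auto)
  also have "\<dots> \<le> (1 / \<tau>) * (real (card A) ^ 2 * real (card B) * q ^ 4)"
    unfolding rexp_cmult using rexp_card_sum_collisions_le[OF assms(1-5)] assms(7)
    by (intro mult_left_mono) auto
  finally show ?thesis by simp
qed

text \<open>If both blocks meet \<open>R\<close> in about the expected \<open>q M\<close> points and there are few collisions,
  then the sumset of the two traces is large.\<close>
lemma rprob_few_triples_two_blocks:
  assumes fI: "finite I" and AB: "A \<subseteq> I" "B \<subseteq> I" "A \<inter> B = {}" "card A = M" "card B = M"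
    and q: "0 \<le> q" "q \<le> 1" and qM: "0 < q * M" and \<tau>: "0 < \<tau>" and fN: "finite Ns"
    and third: "\<And>n a b. n \<in> Ns \<Longrightarrow> a \<in> A \<Longrightarrow> b \<in> B \<Longrightarrow> n - a - b \<in> I - (A \<union> B)"
    and N0: "real N0 \<le> (q * M / 2) ^ 2 - \<tau>" and k: "k \<le> N0" "1 \<le> real N0 * q"
  shows "rprob I q (\<lambda>R. \<exists>n\<in>Ns. card {T \<in> triples I n. T \<subseteq> R} \<le> k)
    \<le> 8 / (q * M) + real M ^ 3 * q ^ 4 / \<tau>
      + real (card Ns) * (real (k + 1) * (real N0 * q) ^ k * (1 - q) ^ (N0 - k))"
proof -
  let ?E = "\<lambda>R. \<exists>n\<in>Ns. card {T \<in> triples I n. T \<subseteq> R} \<le> k"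
  let ?small = "\<lambda>X R. real (card (R \<inter> X)) < q * M / 2"
  let ?coll = "\<lambda>R. \<tau> < real (card (sum_collisions (R \<inter> A) (R \<inter> B)))"
  let ?dense = "\<lambda>R. N0 \<le> card ((R \<inter> A) + (R \<inter> B)) \<and> ?E R"
  have fA: "finite A" "finite B" using fI AB finite_subset by blast+
  have "rprob I q ?E \<le> rprob I q (\<lambda>R. (?small A R \<or> ?small B R) \<or> (?coll R \<or> ?dense R))"
  proof (rule rprob_mono[OF fI q])
    fix R assume "R \<subseteq> I" and E: "?E R"
    show "(?small A R \<or> ?small B R) \<or> (?coll R \<or> ?dense R)"
    proof (cases "(?small A R \<or> ?small B R) \<or> ?coll R")
      case not: False
      have "(q * M / 2) ^ 2 \<le> real (card (R \<inter> A)) * real (card (R \<inter> B))"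
        using qM not unfolding power2_eq_square by (intro mult_mono) auto
      also have "\<dots> \<le> real (card ((R \<inter> A) + (R \<inter> B))) + real (card (sum_collisions (R \<inter> A) (R \<inter> B)))"
        using card_times_le_card_sumset[of "R \<inter> A" "R \<inter> B"] fA by (simp flip: of_nat_mult of_nat_add)
      finally have "N0 \<le> card ((R \<inter> A) + (R \<inter> B))" using not N0 by linarith
      with E show ?thesis by blast
    qed blast
  qed
  also have "\<dots> \<le> (rprob I q (?small A) + rprob I q (?small B)) + (rprob I q ?coll + rprob I q ?dense)"
    by (intro order.trans[OF rprob_disj_le[OF fI q]] add_mono rprob_disj_le[OF fI q])
  also have "\<dots> \<le> (4 / (q * M) + 4 / (q * M)) + (real M ^ 3 * q ^ 4 / \<tau>
      + real (card Ns) * (real (k + 1) * (real N0 * q) ^ k * (1 - q) ^ (N0 - k)))"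
  proof (intro add_mono)
    show "rprob I q (?small A) \<le> 4 / (q * M)" "rprob I q (?small B) \<le> 4 / (q * M)"
      using rprob_card_Int_less_half_mean[OF fI AB(1) q] rprob_card_Int_less_half_mean[OF fI AB(2) q]
        AB(4,5) qM by auto
    show "rprob I q ?coll \<le> real M ^ 3 * q ^ 4 / \<tau>"
      using rprob_many_sum_collisions[OF fI AB(1-3) q \<tau>] AB(4,5)
      by (simp add: power2_eq_square power3_eq_cube)
    show "rprob I q ?dense \<le> real (card Ns) * (real (k + 1) * (real N0 * q) ^ k * (1 - q) ^ (N0 - k))"
      by (rule rprob_large_sumset_few_triples[OF fI AB(1-3) q fN third k])
  qed
  finally show ?thesis by simp
qed

lemma nat_floor_le: "0 \<le> (y::real) \<Longrightarrow> real (nat \<lfloor>y\<rfloor>) \<le> y"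
  by (simp add: of_nat_nat)

lemma nat_floor_ge: "0 \<le> (y::real) \<Longrightarrow> y - 1 \<le> real (nat \<lfloor>y\<rfloor>)"
  by (simp add: of_nat_nat)

text \<open>The quantitative content of "\<open>p\<close> sufficiently large"; beyond \<open>K1\<close> the inequalities in \<open>K\<close>
  needed for the binomial tail in (d) hold.\<close>
locale large_p =
  fixes p :: nat and K1 :: real
  assumes K1_ge: "2 \<le> K1"
    and K1_tail: "\<And>K. K1 \<le> K \<Longrightarrow>
      ln 3 + K + ln (K^2 + 1) + ln K + 3 * K^2 * ln K + 1 + K^2 - K^3 / 1280000 \<le> 0"
    and K1_cube: "\<And>K. K1 \<le> K \<Longrightarrow> 2560000 \<le> K^3"
    and ln_p_ge: "K1 \<le> ln (real p)"
    and p_large: "(2 * ln (real p))^9 \<le> real p powr (1/3)"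
      "1280000 * (2 * ln (real p))^3 \<le> real p powr (1/3)"
      "2 * ln (real p) \<le> real p powr (2/3)"
      "3200 \<le> real p powr (1/3)"
begin

abbreviation "K \<equiv> real_of_int \<lceil>ln (real p)\<rceil>"
abbreviation "q \<equiv> K * real p powr (-2/3)"
abbreviation "r \<equiv> real p powr (1/3)"
abbreviation "H \<equiv> int p div 2 - 1"

lemma p_pos: "0 < real p"
  using p_large(4) by (cases "p = 0") auto

lemma r_pos: "0 < r" using p_pos by simp

lemma r_cube: "r ^ 3 = real p"
proof -
  have "r ^ 3 = r * r * r" by (simp add: power3_eq_cube)
  also have "\<dots> = real p powr (1/3 + 1/3 + 1/3)" by (simp only: powr_add)
  finally show ?thesis using p_pos by simp
qed

lemma q_eq: "q = K / r ^ 2"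
proof -
  have "real p powr (-2/3) * r ^ 2 = real p powr (-2/3) * r * r" by (simp add: power2_eq_square)
  also have "\<dots> = real p powr (-2/3 + 1/3 + 1/3)" by (simp only: powr_add)
  finally have "real p powr (-2/3) * r ^ 2 = 1" using p_pos by simp
  then show ?thesis using r_pos by (simp add: field_simps)
qed

lemma K_bounds: "ln (real p) \<le> K" "K \<le> 2 * ln (real p)" "2 \<le> K" "K1 \<le> K"
  using ln_p_ge K1_ge by linarith+

lemma K_pos: "0 < K" using K_bounds by linarith

lemma p_le_exp_K: "real p \<le> exp K"
  using p_pos K_bounds(1) by (metis exp_le_cancel_iff exp_ln)

lemma q_nonneg: "0 \<le> q" using K_pos by simp

lemma q_le_1: "q \<le> 1"
proof -
  have "r ^ 2 = real p powr (2/3)" by (simp add: power2_eq_square flip: powr_add)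
  then have "K \<le> r ^ 2" using K_bounds(2) p_large(3) by linarith
  then show ?thesis unfolding q_eq using r_pos by (simp add: field_simps)
qed

lemma K_pow_le_r: "K ^ 9 \<le> r" "1280000 * K ^ 3 \<le> r"
proof -
  have "K ^ 9 \<le> (2 * ln (real p)) ^ 9" "K ^ 3 \<le> (2 * ln (real p)) ^ 3"
    using K_bounds by (intro power_mono; linarith)+
  then show "K ^ 9 \<le> r" "1280000 * K ^ 3 \<le> r" using p_large(1,2) by linarith+
qed

lemma card_I: "card {1..H} = nat H" by simp

lemma nat_H_le: "real (nat H) \<le> real p / 2" by linarith

lemma rexp_card_Int_sums_bound: "rexp {1..H} q (\<lambda>R. real (card (R \<inter> {a + b + e | a b e. a \<in> R \<and> b \<in> R \<and> e \<in> {0, 1}})))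
    \<le> 300 * K ^ 3"
proof -
  have "rexp {1..H} q (\<lambda>R. real (card (R \<inter> {a + b + e | a b e. a \<in> R \<and> b \<in> R \<and> e \<in> {0, 1}})))
      \<le> 2 * real (nat H) ^ 2 * q ^ 3 + 2 * real (nat H) * q ^ 2"
    using rexp_card_Int_sums_le[of "{1..H}" q] q_nonneg q_le_1 by simp
  also have "\<dots> \<le> 2 * (r ^ 3 / 2) ^ 2 * (K / r ^ 2) ^ 3 + 2 * (r ^ 3 / 2) * (K / r ^ 2) ^ 2"
    unfolding r_cube q_eq[symmetric] using nat_H_le q_nonneg
    by (intro add_mono mult_right_mono mult_left_mono power_mono) auto
  also have "\<dots> = K ^ 3 / 2 + K ^ 2 / r"
    using r_pos by (simp add: field_simps power2_eq_square power3_eq_cube)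
  also have "\<dots> \<le> 300 * K ^ 3"
  proof -
    have "K ^ 2 * 1 \<le> K ^ 2 * r" using p_large(4) by (intro mult_left_mono) auto
    then have "K ^ 2 / r \<le> K ^ 2" using r_pos by (simp add: divide_le_eq)
    moreover have "K ^ 2 \<le> K ^ 3" using K_bounds by (intro power_increasing) auto
    moreover have "0 \<le> K ^ 3" using K_pos by simp
    ultimately show ?thesis by linarith
  qed
  finally show ?thesis .
qed

lemma configurations_bound:
  assumes "real m \<le> real p"
  shows "real m * real (nat H) ^ 4 * q ^ 8 \<le> 1 / K"
proof -
  have "real m * real (nat H) ^ 4 * q ^ 8 \<le> r ^ 3 * (r ^ 3 / 2) ^ 4 * (K / r ^ 2) ^ 8"
    unfolding r_cube q_eq[symmetric] using assms nat_H_le q_nonneg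
    by (intro mult_right_mono mult_mono power_mono) auto
  also have "\<dots> = K ^ 8 / (16 * r)"
    using r_pos by (simp add: field_simps) (simp add: power_Suc[symmetric])
  also have "\<dots> \<le> 1 / K"
  proof -
    have "K ^ 8 * K = K ^ 9" by (simp flip: power_Suc2)
    then have "K ^ 8 * K \<le> 16 * r" using K_pow_le_r(1) r_pos by linarith
    then show ?thesis using r_pos K_pos by (simp add: field_simps)
  qed
  finally show ?thesis .
qed

lemma rprob_conv_self_bound: "rprob {1..H} q (\<lambda>R. \<exists>n. conv (indicator R) (indicator R) n \<ge> 9) \<le> 300 / K"
proof -
  have "2 * H + 1 \<le> int p" by presburger
  then have "real (nat (2 * H + 1)) \<le> real p" by linarith
  then have "real (nat (2 * H + 1)) * real (nat H) ^ 4 * q ^ 8 \<le> 1 / K"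
    by (rule configurations_bound)
  moreover have "rprob {1..H} q (\<lambda>R. \<exists>n. conv (indicator R) (indicator R) n \<ge> 9)
      \<le> real (nat (2 * H + 1)) * real (card {1..H}) ^ 4 * q ^ 8"
    by (rule rprob_conv_self_ge_9) (use q_nonneg q_le_1 in auto)
  moreover have "1 / K \<le> 300 / K" using K_pos by (simp add: divide_right_mono)
  ultimately show ?thesis unfolding card_I by linarith
qed

lemma rprob_conv_uminus_bound:
  "rprob {1..H} q (\<lambda>R. \<exists>n. n \<noteq> 0 \<and> conv (indicator R) (indicator (uminus ` R)) n \<ge> 8) \<le> 300 / K"
proof -
  have "real (nat H) \<le> real p" by linarith
  then have "real (nat H) * real (nat H) ^ 4 * q ^ 8 \<le> 1 / K"
    by (rule configurations_bound)
  moreover have "rprob {1..H} q (\<lambda>R. \<exists>n. n \<noteq> 0 \<and> conv (indicator R) (indicator (uminus ` R)) n \<ge> 8)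
      \<le> real (nat H) * real (card {1..H}) ^ 4 * q ^ 8"
    by (rule rprob_conv_uminus_ge_8) (use q_nonneg q_le_1 in auto)
  moreover have "1 / K \<le> 300 / K" using K_pos by (simp add: divide_right_mono)
  ultimately show ?thesis unfolding card_I by linarith
qed

abbreviation "M \<equiv> p div 200"
abbreviation "\<tau> \<equiv> K ^ 5 * r"
abbreviation "N0 \<equiv> nat \<lfloor>q ^ 2 * real M ^ 2 / 8\<rfloor>"
abbreviation "kk \<equiv> nat \<lfloor>K ^ 2\<rfloor>"

lemma tau_pos: "0 < \<tau>" by (rule mult_pos_pos[OF zero_less_power[OF K_pos] r_pos])

lemma p_ge: "32768000000 \<le> real p"
proof -
  have "(3200::real) ^ 3 \<le> r ^ 3" using p_large(4) by (intro power_mono) auto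
  then show ?thesis using r_cube by simp
qed

lemma M_ge: "real p / 400 \<le> real M"
proof -
  have "p \<le> 200 * M + 199" by linarith
  then have "real p \<le> 200 * real M + 199" by linarith
  then show ?thesis using p_ge by linarith
qed

lemma M_le: "real M \<le> real p / 200"
proof -
  have "200 * M \<le> p" by linarith
  then have "200 * real M \<le> real p" by linarith
  then show ?thesis by linarith
qed

lemma M_big: "279 \<le> M"
proof -
  have "279 \<le> real M" using M_ge p_ge by linarith
  then show ?thesis by linarith
qed

lemma qM_ge: "K * r / 400 \<le> q * real M"
proof -
  have "q * real M \<ge> (K / r^2) * (r^3 / 400)"
    using M_ge q_nonneg unfolding q_eq[symmetric] r_cube by (intro mult_left_mono) auto
  moreover have "(K / r^2) * (r^3 / 400) = K * r / 400" using r_pos by (simp add: field_simps power2_eq_square power3_eq_cube)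
  ultimately show ?thesis by linarith
qed

lemma qM_le: "q * real M \<le> K * r / 200"
proof -
  have "q * real M \<le> (K / r^2) * (r^3 / 200)"
    using M_le q_nonneg unfolding q_eq[symmetric] r_cube by (intro mult_left_mono) auto
  moreover have "(K / r^2) * (r^3 / 200) = K * r / 200" using r_pos by (simp add: field_simps power2_eq_square power3_eq_cube)
  ultimately show ?thesis by linarith
qed

lemma qM_pos: "0 < q * real M" using qM_ge K_pos r_pos by (smt (verit) divide_pos_pos mult_pos_pos)

lemma size_error_le: "8 / (q * real M) \<le> 1 / K"
proof -
  have "8 * K \<le> K * r / 400" using p_large(4) K_pos by (simp add: field_simps)
  then have h: "8 * K \<le> q * real M" using qM_ge by linarith
  have "8 / (q * real M) \<le> 8 / (8 * K)" using h K_pos by (intro divide_left_mono) auto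
  then show ?thesis by simp
qed

lemma collision_error_le: "real M ^ 3 * q ^ 4 / \<tau> \<le> 1 / K"
proof -
  have "real M ^ 3 * q ^ 4 = (q * real M) ^ 3 * q" by (simp add: power_mult_distrib algebra_simps power3_eq_cube power4_eq_xxxx)
  also have "\<dots> \<le> (K * r / 200) ^ 3 * (K / r ^ 2)"
    using qM_le qM_pos q_nonneg unfolding q_eq by (intro mult_right_mono power_mono) auto
  also have "\<dots> = K ^ 4 * r / 8000000" using r_pos by (simp add: field_simps power2_eq_square power3_eq_cube power4_eq_xxxx)
  also have "\<dots> \<le> K ^ 4 * r" using K_pos r_pos by simp
  finally have h: "real M ^ 3 * q ^ 4 \<le> K ^ 4 * r" .
  have "real M ^ 3 * q ^ 4 / \<tau> \<le> K ^ 4 * r / \<tau>" using h tau_pos by (intro divide_right_mono) auto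
  also have "\<dots> = 1 / K"
  proof -
    have "K ^ 5 = K ^ 4 * K" using power_Suc2[of K 4] by simp
    moreover have kne: "K \<noteq> 0" using K_pos by linarith
    moreover have "K ^ 4 \<noteq> 0" using kne by (rule power_not_zero)
    ultimately show ?thesis using r_pos by simp
  qed
  finally show ?thesis .
qed

lemma qM_sq_ge: "K ^ 2 * r ^ 2 / 160000 \<le> q ^ 2 * real M ^ 2"
proof -
  have "(K * r / 400) ^ 2 \<le> (q * real M) ^ 2" using qM_ge mult_pos_pos[OF K_pos r_pos] by (intro power_mono) auto
  then show ?thesis by (simp add: power_mult_distrib power_divide)
qed

lemma qM_sq_le: "q ^ 2 * real M ^ 2 \<le> K ^ 2 * r ^ 2 / 40000"
proof -
  have "(q * real M) ^ 2 \<le> (K * r / 200) ^ 2" using qM_le qM_pos by (intro power_mono) auto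
  then show ?thesis by (simp add: power_mult_distrib power_divide)
qed

lemma tau_le_qM_sq: "\<tau> \<le> q ^ 2 * real M ^ 2 / 8"
proof -
  have "K ^ 3 * (K ^ 2 * r) \<le> (r / 1280000) * (K ^ 2 * r)"
    using K_pow_le_r(2) K_pos r_pos by (intro mult_right_mono) auto
  then have "\<tau> \<le> K ^ 2 * r ^ 2 / 1280000" by (simp add: power2_eq_square power3_eq_cube algebra_simps eval_nat_numeral)
  then show ?thesis using qM_sq_ge by linarith
qed

lemma N0_le: "real N0 \<le> q ^ 2 * real M ^ 2 / 8"
  by (rule nat_floor_le) simp

lemma N0_ge: "q ^ 2 * real M ^ 2 / 8 - 1 \<le> real N0"
  by (rule nat_floor_ge) simp

lemma N0_le_sumset_bound: "real N0 \<le> (q * real M / 2) ^ 2 - \<tau>"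
  using N0_le tau_le_qM_sq by (simp add: power_mult_distrib power_divide)

lemma kk_le: "real kk \<le> K ^ 2"
  by (rule nat_floor_le) simp

lemma K_sq_ge_4: "4 \<le> K ^ 2"
proof -
  have "(2::real) ^ 2 \<le> K ^ 2" using K_bounds(3) by (intro power_mono) auto
  then show ?thesis by simp
qed

lemma K_sq_le_qM_sq: "8 * K ^ 2 \<le> q ^ 2 * real M ^ 2 / 8"
proof -
  have "(3200::real) ^ 2 \<le> r ^ 2" using p_large(4) by (intro power_mono) auto
  then have "K ^ 2 * 3200 ^ 2 \<le> K ^ 2 * r ^ 2" using K_pos by (intro mult_left_mono) auto
  then have "64 * K ^ 2 \<le> K ^ 2 * r ^ 2 / 160000" by simp
  then show ?thesis using qM_sq_ge by linarith
qed

lemma kk_le_N0: "kk \<le> N0"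
proof -
  have "real kk \<le> real N0" using kk_le K_sq_le_qM_sq N0_ge K_sq_ge_4 by linarith
  then show ?thesis by (simp only: of_nat_le_iff)
qed

lemma N0_q_le: "real N0 * q \<le> K ^ 3"
proof -
  have "real N0 * q \<le> (K ^ 2 * r ^ 2 / 40000 / 8) * q"
    using N0_le qM_sq_le q_nonneg by (intro mult_right_mono) auto
  also have "\<dots> = K ^ 3 / 320000" unfolding q_eq using r_pos by (simp add: field_simps power2_eq_square power3_eq_cube)
  also have "\<dots> \<le> K ^ 3" using K_pos by simp
  finally show ?thesis .
qed

lemma N0_q_ge: "K ^ 3 / 1280000 - 1 \<le> real N0 * q"
proof -
  have "K ^ 2 * r ^ 2 / 160000 / 8 - 1 \<le> real N0" using N0_ge qM_sq_ge by linarith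
  then have "(K ^ 2 * r ^ 2 / 160000 / 8 - 1) * q \<le> real N0 * q"
    using q_nonneg by (rule mult_right_mono)
  moreover have "(K ^ 2 * r ^ 2 / 160000 / 8 - 1) * q = K ^ 3 / 1280000 - q"
    unfolding q_eq using r_pos by (simp add: field_simps power2_eq_square power3_eq_cube)
  ultimately show ?thesis using q_le_1 by linarith
qed

lemma N0_q_ge_1: "1 \<le> real N0 * q"
  using N0_q_ge K1_cube[OF K_bounds(4)] by linarith

lemma tail_exp_le: "3 * exp K * (K ^ 2 + 1) * exp (3 * K ^ 2 * ln K + K ^ 2 + 1 - K ^ 3 / 1280000) \<le> 1 / K"
proof -
  have e: "3 * exp K * (K ^ 2 + 1) * exp (3 * K ^ 2 * ln K + K ^ 2 + 1 - K ^ 3 / 1280000)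
      = exp (ln 3 + K + ln (K^2+1) + 3*K^2*ln K + K^2 + 1 - K^3/1280000)"
  proof -
    have "exp (ln (K^2+1)) = K^2+1" by (rule exp_ln) (intro add_nonneg_pos zero_le_power2 zero_less_one)
    then show ?thesis by (simp add: exp_add exp_diff)
  qed
  have "ln 3 + K + ln (K^2+1) + 3*K^2*ln K + K^2 + 1 - K^3/1280000 \<le> - ln K"
    using K1_tail[OF K_bounds(4)] by linarith
  then have "exp (ln 3 + K + ln (K^2+1) + 3*K^2*ln K + K^2 + 1 - K^3/1280000) \<le> exp (- ln K)" by simp
  also have "\<dots> = 1 / K" using K_pos by (simp add: exp_minus inverse_eq_divide)
  finally show ?thesis using e by simp
qed

lemma N0_q_pow_le: "(real N0 * q) ^ kk \<le> exp (3 * K ^ 2 * ln K)"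
proof -
  have "(real N0 * q) ^ kk \<le> (K ^ 3) ^ kk" using N0_q_le N0_q_ge_1 by (intro power_mono) auto
  also have "\<dots> = exp (ln (K ^ 3)) ^ kk" using K_pos by simp
  also have "\<dots> = exp (real kk * (3 * ln K))" using K_pos by (simp add: ln_realpow flip: exp_of_nat_mult)
  also have "\<dots> \<le> exp (K ^ 2 * (3 * ln K))"
    using kk_le K_pos K_bounds(3) by (intro iffD2[OF exp_le_cancel_iff] mult_right_mono) auto
  finally show ?thesis by (simp add: algebra_simps)
qed

lemma one_minus_q_pow_le: "(1 - q) ^ (N0 - kk) \<le> exp (K ^ 2 + 1 - K ^ 3 / 1280000)"
proof -
  have "(1 - q) ^ (N0 - kk) \<le> exp (- q) ^ (N0 - kk)"
    using q_le_1 by (intro power_mono) (auto simp: exp_ge_add_one_self[of "-q", simplified])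
  also have "\<dots> = exp (- q * real (N0 - kk))" by (simp add: exp_of_nat_mult[symmetric] mult.commute)
  also have "- q * real (N0 - kk) = - (real N0 * q) + q * real kk"
    using kk_le_N0 by (simp add: of_nat_diff algebra_simps)
  also have "\<dots> \<le> K ^ 2 + 1 - K ^ 3 / 1280000"
  proof -
    have "q * real kk \<le> real kk" by (rule mult_left_le_one_le[OF _ q_nonneg q_le_1]) simp
    then show ?thesis using N0_q_ge kk_le by linarith
  qed
  finally show ?thesis by simp
qed

lemma tail_error_le:
  assumes "card X \<le> 2 * p + 1"
  shows "real (card X) * (real (kk + 1) * (real N0 * q) ^ kk * (1 - q) ^ (N0 - kk)) \<le> 1 / K"
proof -
  have "real (card X) \<le> 3 * exp K" using assms p_le_exp_K p_ge by linarith
  moreover have "real (kk + 1) \<le> K ^ 2 + 1" using kk_le by simp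
  ultimately have "real (card X) * (real (kk + 1) * (real N0 * q) ^ kk * (1 - q) ^ (N0 - kk))
      \<le> (3 * exp K) * ((K ^ 2 + 1) * exp (3 * K ^ 2 * ln K) * exp (K ^ 2 + 1 - K ^ 3 / 1280000))"
    using N0_q_pow_le one_minus_q_pow_le N0_q_ge_1 q_le_1 by (intro mult_mono) auto
  also have "\<dots> = 3 * exp K * (K ^ 2 + 1) * exp (3 * K ^ 2 * ln K + K ^ 2 + 1 - K ^ 3 / 1280000)"
    by (simp add: exp_add[symmetric] algebra_simps)
  also have "\<dots> \<le> 1 / K" by (rule tail_exp_le)
  finally show ?thesis .
qed

definition block :: "int \<Rightarrow> int set" where
  "block j = {j * int M + 1 .. (j + 1) * int M}"

lemma card_block: "card (block j) = M"
  unfolding block_def by (simp add: algebra_simps)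

lemma block_disjoint: "block j \<inter> block (j + 1) = {}"
  unfolding block_def by auto

lemma M_le_H: "99 * int M \<le> H"
  using M_big by linarith

lemma block_subset: "1 \<le> j \<Longrightarrow> j \<le> 98 \<Longrightarrow> block j \<subseteq> {1..H}"
proof -
  assume j: "1 \<le> j" "j \<le> 98"
  have "0 \<le> j * int M" using j by simp
  moreover have "(j + 1) * int M \<le> 99 * int M" using j by (intro mult_right_mono) auto
  ultimately show ?thesis unfolding block_def using M_le_H by (auto simp: algebra_simps)
qed

lemma div_M_bounds:
  fixes n :: int
  assumes "int p \<le> 5 * n" "5 * n \<le> 7 * int p"
  shows "n div int M * int M \<le> n" "n < n div int M * int M + int M"
    and "40 \<le> n div int M" "n div int M \<le> 281"
proof -
  define m where "m = int M"
  define \<nu> where "\<nu> = n div m"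
  have m: "279 \<le> m" "200 * m \<le> int p" "int p \<le> 200 * m + 199" unfolding m_def using M_big by linarith+
  have \<nu>: "\<nu> * m \<le> n" "n < \<nu> * m + m"
    unfolding \<nu>_def using m(1)
    by (metis mult.commute mult_div_mod_eq le_add_same_cancel1 pos_mod_sign zero_less_numeral
          order_less_le_trans,
        metis add.commute add_less_cancel_left mult.commute mult_div_mod_eq pos_mod_bound
          zero_less_numeral order_less_le_trans)
  then show "n div int M * int M \<le> n" "n < n div int M * int M + int M" unfolding \<nu>_def m_def .
  show "40 \<le> n div int M"
  proof (rule ccontr)
    assume "\<not> 40 \<le> n div int M"
    then have "(\<nu> + 1) * m \<le> 40 * m" using m unfolding \<nu>_def m_def by (intro mult_right_mono) auto
    then have "\<nu> * m + m \<le> 40 * m" by (simp add: algebra_simps)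
    then show False using \<nu> m assms(1) by linarith
  qed
  show "n div int M \<le> 281"
  proof (rule ccontr)
    assume "\<not> n div int M \<le> 281"
    then have "282 * m \<le> \<nu> * m" using m unfolding \<nu>_def m_def by (intro mult_right_mono) auto
    then show False using \<nu> m assms(2) by linarith
  qed
qed

text \<open>The \<open>n\<close> are grouped by \<open>j = \<lceil>\<lfloor>n / M\<rfloor> / 3\<rceil>\<close>: then \<open>a + b\<close> with \<open>a, b\<close> in the blocks \<open>j\<close> and \<open>j + 1\<close>
  leaves a third element \<open>n - a - b\<close> in \<open>[M, j M]\<close>, below both blocks.\<close>
lemma block_index:
  fixes n :: int
  assumes "int p \<le> 5 * n" "5 * n \<le> 7 * int p"
  defines "j \<equiv> (n div int M + 2) div 3"
  shows "1 \<le> j" "j \<le> 97"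
    and "\<And>a b. a \<in> block j \<Longrightarrow> b \<in> block (j + 1) \<Longrightarrow> n - a - b \<in> {1..H} - (block j \<union> block (j + 1))"
proof -
  define m where "m = int M"
  define \<nu> where "\<nu> = n div m"
  note \<nu> = div_M_bounds[OF assms(1,2), folded m_def \<nu>_def]
  have m: "279 \<le> m" unfolding m_def using M_big by linarith
  have j: "\<nu> \<le> 3 * j" "3 * j \<le> \<nu> + 2" unfolding j_def \<nu>_def m_def by linarith+
  then show j_bounds: "1 \<le> j" "j \<le> 97" using \<nu>(3,4) by linarith+
  fix a b assume "a \<in> block j" "b \<in> block (j + 1)"
  then have ab: "j * m + 1 \<le> a" "a \<le> (j + 1) * m" "(j + 1) * m + 1 \<le> b" "b \<le> (j + 2) * m"
    unfolding block_def m_def by (auto simp: algebra_simps)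
  have "0 \<le> (\<nu> - 2 * j - 4) * m" using \<nu>(3) j m by (intro mult_nonneg_nonneg) auto
  then have lo: "m \<le> n - a - b" using \<nu>(1) ab(2,4) by (simp add: algebra_simps)
  have "0 \<le> (3 * j - \<nu>) * m" using j m by (intro mult_nonneg_nonneg) auto
  then have hi: "n - a - b < j * m + 1" using \<nu>(2) ab(1,3) by (simp add: algebra_simps)
  have "j * m \<le> 97 * m" using j_bounds m by (intro mult_right_mono) auto
  then have "1 \<le> n - a - b" "n - a - b \<le> H" using lo hi M_le_H m unfolding m_def by linarith+
  then have "n - a - b \<in> {1..H}" by simp
  moreover have "j * m + 1 \<le> (j + 1) * m" using m by (simp add: algebra_simps)
  then have "n - a - b \<notin> block j \<union> block (j + 1)"
    using hi unfolding block_def m_def by auto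
  ultimately show "n - a - b \<in> {1..H} - (block j \<union> block (j + 1))" by simp
qed

definition window :: "int \<Rightarrow> int set" where
  "window j = {n. int p \<le> 5 * n \<and> 5 * n \<le> 7 * int p \<and> (n div int M + 2) div 3 = j}"

lemma rprob_few_triples_window:
  assumes "j \<in> {1..97}"
  shows "rprob {1..H} q (\<lambda>R. \<exists>n\<in>window j. card {T \<in> triples {1..H} n. T \<subseteq> R} \<le> kk) \<le> 3 / K"
proof -
  have sub: "window j \<subseteq> {0..2 * int p}" unfolding window_def by auto
  then have fin: "finite (window j)" by (rule finite_subset) simp
  have "card (window j) \<le> card {0..2 * int p}" using sub by (intro card_mono) auto
  then have card_window: "card (window j) \<le> 2 * p + 1" by simp
  have third: "n - a - b \<in> {1..H} - (block j \<union> block (j + 1))"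
    if "n \<in> window j" "a \<in> block j" "b \<in> block (j + 1)" for n a b
    using that block_index(3)[of n a b] unfolding window_def by auto
  have "rprob {1..H} q (\<lambda>R. \<exists>n\<in>window j. card {T \<in> triples {1..H} n. T \<subseteq> R} \<le> kk)
    \<le> 8 / (q * M) + real M ^ 3 * q ^ 4 / \<tau>
      + real (card (window j)) * (real (kk + 1) * (real N0 * q) ^ kk * (1 - q) ^ (N0 - kk))"
    using assms block_subset[of j] block_subset[of "j + 1"]
    by (intro rprob_few_triples_two_blocks[OF _ _ _ block_disjoint card_block card_block
          q_nonneg q_le_1 qM_pos tau_pos fin third N0_le_sumset_bound kk_le_N0 N0_q_ge_1]) auto
  also have "\<dots> \<le> 1 / K + 1 / K + 1 / K"
    using size_error_le collision_error_le tail_error_le[OF card_window] by linarith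
  finally show ?thesis by simp
qed

lemma rprob_few_triples_bound:
  "rprob {1..H} q (\<lambda>R. \<exists>n::int. real p / 5 \<le> real_of_int n \<and> real_of_int n \<le> 7 * real p / 5 \<and>
      real (card {T \<in> triples {1..H} n. T \<subseteq> R}) \<le> K ^ 2) \<le> 300 / K"
proof -
  have "rprob {1..H} q (\<lambda>R. \<exists>n::int. real p / 5 \<le> real_of_int n \<and> real_of_int n \<le> 7 * real p / 5 \<and>
        real (card {T \<in> triples {1..H} n. T \<subseteq> R}) \<le> K ^ 2)
      \<le> (\<Sum>j\<in>{1..97}. rprob {1..H} q (\<lambda>R. \<exists>n\<in>window j. card {T \<in> triples {1..H} n. T \<subseteq> R} \<le> kk))"
  proof (rule rprob_le_sum)
    fix R assume "\<exists>n::int. real p / 5 \<le> real_of_int n \<and> real_of_int n \<le> 7 * real p / 5 \<and>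
        real (card {T \<in> triples {1..H} n. T \<subseteq> R}) \<le> K ^ 2"
    then obtain n :: int where n: "real p / 5 \<le> real_of_int n" "real_of_int n \<le> 7 * real p / 5"
        "real (card {T \<in> triples {1..H} n. T \<subseteq> R}) \<le> K ^ 2"
      by blast
    then have "real_of_int (int p) \<le> real_of_int (5 * n)" "real_of_int (5 * n) \<le> real_of_int (7 * int p)"
      by simp_all
    then have "int p \<le> 5 * n" "5 * n \<le> 7 * int p" by (simp_all only: of_int_le_iff)
    then have "n \<in> window ((n div int M + 2) div 3)" "(n div int M + 2) div 3 \<in> {1..97}"
      using block_index unfolding window_def by auto
    moreover have "card {T \<in> triples {1..H} n. T \<subseteq> R} \<le> kk" using n(3) by (rule le_nat_floor)
    ultimately show "\<exists>j\<in>{1..97}. \<exists>n\<in>window j. card {T \<in> triples {1..H} n. T \<subseteq> R} \<le> kk" by blast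
  qed (use q_nonneg q_le_1 in auto)
  also have "\<dots> \<le> (\<Sum>j\<in>{1..97::int}. 3 / K)"
    by (intro sum_mono rprob_few_triples_window)
  also have "\<dots> \<le> 300 / K" using K_pos by (simp add: divide_right_mono)
  finally show ?thesis .
qed

end

lemma large_p_eventually: "\<exists>P0::nat. \<forall>p\<ge>P0. \<exists>K1. large_p p K1"
proof -
  have "eventually (\<lambda>K::real. 2 \<le> K \<and>
      ln 3 + K + ln (K^2 + 1) + ln K + 3 * K^2 * ln K + 1 + K^2 - K^3 / 1280000 \<le> 0 \<and>
      2560000 \<le> K^3) at_top"
    by (intro eventually_conj; real_asymp)
  then obtain K1 :: real where K1: "\<And>K. K1 \<le> K \<Longrightarrow> 2 \<le> K \<and>
      ln 3 + K + ln (K^2 + 1) + ln K + 3 * K^2 * ln K + 1 + K^2 - K^3 / 1280000 \<le> 0 \<and>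
      2560000 \<le> K^3"
    unfolding eventually_at_top_linorder by blast
  have "eventually (\<lambda>x::real. K1 \<le> ln x) at_top"
    using ln_at_top unfolding filterlim_at_top by blast
  moreover have "eventually (\<lambda>x::real. (2 * ln x)^9 \<le> x powr (1/3) \<and>
      1280000 * (2 * ln x)^3 \<le> x powr (1/3) \<and> 2 * ln x \<le> x powr (2/3) \<and> 3200 \<le> x powr (1/3)) at_top"
    by (intro eventually_conj; real_asymp)
  ultimately have "eventually (\<lambda>x::real. K1 \<le> ln x \<and> (2 * ln x)^9 \<le> x powr (1/3) \<and>
      1280000 * (2 * ln x)^3 \<le> x powr (1/3) \<and> 2 * ln x \<le> x powr (2/3) \<and> 3200 \<le> x powr (1/3)) at_top"
    by (rule eventually_conj)
  then obtain X0 where X0: "\<And>x. X0 \<le> x \<Longrightarrow> K1 \<le> ln x \<and> (2 * ln x)^9 \<le> x powr (1/3) \<and>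
      1280000 * (2 * ln x)^3 \<le> x powr (1/3) \<and> 2 * ln x \<le> x powr (2/3) \<and> 3200 \<le> x powr (1/3)"
    unfolding eventually_at_top_linorder by blast
  have "large_p p K1" if "nat \<lceil>X0\<rceil> \<le> p" for p
  proof -
    have "X0 \<le> real p" using that by linarith
    then show ?thesis using X0[of "real p"] K1[of K1] K1 by unfold_locales auto
  qed
  then show ?thesis by blast
qed

theorem mainTheorem9:
  shows "\<exists>C>0. \<exists>P0::nat. \<forall>p::nat. prime p \<and> P0 \<le> p \<longrightarrow>
    (let I = {1 .. int p div 2 - 1};
         K = real_of_int \<lceil>ln (real p)\<rceil>;
         q = K * real p powr (-2/3)
     in rexp I q (\<lambda>R. real (card (R \<inter> {a + b + e | a b e. a \<in> R \<and> b \<in> R \<and> e \<in> {0, 1}})))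
          \<le> C * K ^ 3
      \<and> rprob I q (\<lambda>R. \<exists>n. conv (indicator R) (indicator R) n \<ge> 9) \<le> C / K
      \<and> rprob I q (\<lambda>R. \<exists>n. n \<noteq> 0 \<and> conv (indicator R) (indicator (uminus ` R)) n \<ge> 8) \<le> C / K
      \<and> rprob I q (\<lambda>R. \<exists>n::int. real p / 5 \<le> real_of_int n \<and> real_of_int n \<le> 7 * real p / 5 \<and>
             real (card {T \<in> triples I n. T \<subseteq> R}) \<le> K ^ 2) \<le> C / K)"
proof -
  obtain P0 :: nat where P0: "\<And>p. P0 \<le> p \<Longrightarrow> \<exists>K1. large_p p K1"
    using large_p_eventually by blast
  show ?thesis
  proof (rule exI[of _ 300], rule conjI, simp, rule exI[of _ P0], intro allI impI)
    fix p :: nat assume "prime p \<and> P0 \<le> p"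
    then obtain K1 where "large_p p K1" using P0 by blast
    then interpret large_p p K1 .
    show "let I = {1 .. int p div 2 - 1}; K = real_of_int \<lceil>ln (real p)\<rceil>; q = K * real p powr (-2/3)
      in rexp I q (\<lambda>R. real (card (R \<inter> {a + b + e | a b e. a \<in> R \<and> b \<in> R \<and> e \<in> {0, 1}})))
          \<le> 300 * K ^ 3
      \<and> rprob I q (\<lambda>R. \<exists>n. conv (indicator R) (indicator R) n \<ge> 9) \<le> 300 / K
      \<and> rprob I q (\<lambda>R. \<exists>n. n \<noteq> 0 \<and> conv (indicator R) (indicator (uminus ` R)) n \<ge> 8) \<le> 300 / K
      \<and> rprob I q (\<lambda>R. \<exists>n::int. real p / 5 \<le> real_of_int n \<and> real_of_int n \<le> 7 * real p / 5 \<and>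
             real (card {T \<in> triples I n. T \<subseteq> R}) \<le> K ^ 2) \<le> 300 / K"
      unfolding Let_def
      using rexp_card_Int_sums_bound rprob_conv_self_bound rprob_conv_uminus_bound rprob_few_triples_bound
      by blast
  qed
qed

end
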